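(* For every $m\geq1$, the invariant subring $\mathcal{K}(m)^{\mathfrak{S}_3}$ is generated by \[ \{z(i,I)\mid 1\leq i\leq 6,\ I\subset \{1,\dots, m\},\ |I|\leq 3\}. \]
   Context: Let $J=(x+y+w,\ x^2+y^2+w^2,\ x^6+y^6+w^6)\subset\mathbb{Q}[x,y,w]$ with $x,y,w$ of degree 2, and let $\mathcal{K}(m)=\mathbb{Q}[x,y,w]/J\otimes\bigotimes_{j=1}^m\Lambda(\alpha_j,\beta_j,\gamma_j)/(\alpha_j+\beta_j+\gamma_j)$ with $\alpha_j,\beta_j,\gamma_j$ of degree 1 (this is $H^*(G_2/T\times T^m;\mathbb{Q})$ for $T$ a maximal torus of $SU(3)\subset G_2$). The symmetric group $\mathfrak{S}_3$ (the Weyl group of $SU(3)$) acts on $\mathcal{K}(m)$ by permuting $x,y,w$ and simultaneously permuting each triple $(\alpha_j,\beta_j,\gamma_j)$ in the same way. For $I=\{i_1<\dots<i_k\}$ put $\alpha_I=\alpha_{i_1}\cdots\alpha_{i_k}$ ($\alpha_\emptyset=1$), similarly $\beta_I,\gamma_I$, and for $d\ge0$ put $z(d+1,I)=x^d\alpha_I+y^d\beta_I+w^d\gamma_I$. *)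

theory Defs
  imports Complex_Main "HOL-Library.Product_Lexorder" "HOL-Combinatorics.Permutations"
begin

text \<open>
  Concrete model of the graded-commutative Q-algebra
  A(m) = Q[x_0,x_1,x_2] (x) Lambda(a_{j,k} : 1<=j<=m, k<3)
  (x_0=x, x_1=y, x_2=w; a_{j,0}=alpha_j, a_{j,1}=beta_j, a_{j,2}=gamma_j).
  A monomial is a pair (e,S): e gives the exponents of the even generators,
  S is the set of odd generators occurring; it stands for the product
  x^e * (product of the elements of S in increasing lexicographic order).
  Elements are finitely supported coefficient functions.
\<close>

type_synonym mono = "(nat \<Rightarrow> nat) \<times> (nat \<times> nat) set"
type_synonym sp = "mono \<Rightarrow> rat"

definition sp_supp :: "sp \<Rightarrow> mono set" where
  "sp_supp f = {p. f p \<noteq> 0}"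

text \<open>sign of reordering the concatenation of the sorted S and sorted T\<close>
definition mono_sign :: "(nat \<times> nat) set \<Rightarrow> (nat \<times> nat) set \<Rightarrow> rat" where
  "mono_sign S T = (-1) ^ card {(s,t). s \<in> S \<and> t \<in> T \<and> t < s}"

definition mono_times :: "mono \<Rightarrow> mono \<Rightarrow> sp" where
  "mono_times p q =
     (if snd p \<inter> snd q = {}
      then (\<lambda>r. if r = (\<lambda>k. fst p k + fst q k, snd p \<union> snd q)
                 then mono_sign (snd p) (snd q) else 0)
      else (\<lambda>r. 0))"

definition sp_mult :: "sp \<Rightarrow> sp \<Rightarrow> sp" where
  "sp_mult f g = (\<lambda>r. \<Sum>(p,q) \<in> sp_supp f \<times> sp_supp g. f p * g q * mono_times p q r)"

definition sp_add :: "sp \<Rightarrow> sp \<Rightarrow> sp" where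
  "sp_add f g = (\<lambda>r. f r + g r)"

definition sp_sub :: "sp \<Rightarrow> sp \<Rightarrow> sp" where
  "sp_sub f g = (\<lambda>r. f r - g r)"

definition sp_smult :: "rat \<Rightarrow> sp \<Rightarrow> sp" where
  "sp_smult c f = (\<lambda>r. c * f r)"

definition sp_basis :: "mono \<Rightarrow> sp" where
  "sp_basis p = (\<lambda>r. if r = p then 1 else 0)"

definition sp_one :: sp where
  "sp_one = sp_basis (\<lambda>_. 0, {})"

primrec sp_pow :: "sp \<Rightarrow> nat \<Rightarrow> sp" where
  "sp_pow f 0 = sp_one"
| "sp_pow f (Suc n) = sp_mult f (sp_pow f n)"

text \<open>even generators: evgen 0 = x, evgen 1 = y, evgen 2 = w\<close>
definition evgen :: "nat \<Rightarrow> sp" where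
  "evgen k = sp_basis (\<lambda>i. if i = k then 1 else 0, {})"

text \<open>odd generators: oddgen j 0 = alpha_j, oddgen j 1 = beta_j, oddgen j 2 = gamma_j\<close>
definition oddgen :: "nat \<Rightarrow> nat \<Rightarrow> sp" where
  "oddgen j k = sp_basis (\<lambda>_. 0, {(j,k)})"

definition Aring :: "nat \<Rightarrow> sp set" where
  "Aring m = {f. finite (sp_supp f) \<and>
      (\<forall>(e,S) \<in> sp_supp f. (\<forall>k\<ge>3. e k = 0) \<and> S \<subseteq> {1..m} \<times> {0,1,2})}"

definition psum :: "nat \<Rightarrow> sp" where
  "psum n = sp_add (sp_pow (evgen 0) n) (sp_add (sp_pow (evgen 1) n) (sp_pow (evgen 2) n))"

definition linrel :: "nat \<Rightarrow> sp" where
  "linrel j = sp_add (oddgen j 0) (sp_add (oddgen j 1) (oddgen j 2))"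

text \<open>the (two-sided) ideal of A(m) generated by J and the alpha_j+beta_j+gamma_j;
  K(m) = A(m) / Jideal m\<close>
inductive_set Jideal :: "nat \<Rightarrow> sp set" for m :: nat where
  gen_p1: "psum 1 \<in> Jideal m"
| gen_p2: "psum 2 \<in> Jideal m"
| gen_p6: "psum 6 \<in> Jideal m"
| gen_lin: "1 \<le> j \<Longrightarrow> j \<le> m \<Longrightarrow> linrel j \<in> Jideal m"
| zero: "(\<lambda>_. 0) \<in> Jideal m"
| add: "f \<in> Jideal m \<Longrightarrow> g \<in> Jideal m \<Longrightarrow> sp_add f g \<in> Jideal m"
| mult_left: "h \<in> Aring m \<Longrightarrow> f \<in> Jideal m \<Longrightarrow> sp_mult h f \<in> Jideal m"
| mult_right: "h \<in> Aring m \<Longrightarrow> f \<in> Jideal m \<Longrightarrow> sp_mult f h \<in> Jideal m"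

definition sp_prod_list :: "sp list \<Rightarrow> sp" where
  "sp_prod_list xs = foldr sp_mult xs sp_one"

text \<open>S_3 action, sigma a permutation of {0,1,2}: the algebra endomorphism with
  evgen k |-> evgen (sigma k) and oddgen j k |-> oddgen j (sigma k)\<close>
definition act_mono :: "(nat \<Rightarrow> nat) \<Rightarrow> mono \<Rightarrow> sp" where
  "act_mono \<sigma> p =
     sp_mult (sp_prod_list (map (\<lambda>k. sp_pow (evgen (\<sigma> k)) (fst p k)) [0,1,2]))
             (sp_prod_list (map (\<lambda>(j,k). oddgen j (\<sigma> k)) (sorted_list_of_set (snd p))))"

definition act :: "(nat \<Rightarrow> nat) \<Rightarrow> sp \<Rightarrow> sp" where
  "act \<sigma> f = (\<lambda>r. \<Sum>p \<in> sp_supp f. f p * act_mono \<sigma> p r)"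

text \<open>alpha_I (k=0), beta_I (k=1), gamma_I (k=2), product in increasing order of I\<close>
definition oddI :: "nat \<Rightarrow> nat set \<Rightarrow> sp" where
  "oddI k I = sp_prod_list (map (\<lambda>i. oddgen i k) (sorted_list_of_set I))"

text \<open>z(d+1,I) = x^d alpha_I + y^d beta_I + w^d gamma_I\<close>
definition zgen :: "nat \<Rightarrow> nat set \<Rightarrow> sp" where
  "zgen i I = sp_add (sp_mult (sp_pow (evgen 0) (i - 1)) (oddI 0 I))
               (sp_add (sp_mult (sp_pow (evgen 1) (i - 1)) (oddI 1 I))
                       (sp_mult (sp_pow (evgen 2) (i - 1)) (oddI 2 I)))"

inductive_set subalg :: "sp set \<Rightarrow> sp set" for G :: "sp set" where
  const: "sp_smult c sp_one \<in> subalg G"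
| gen: "g \<in> G \<Longrightarrow> g \<in> subalg G"
| add: "f \<in> subalg G \<Longrightarrow> g \<in> subalg G \<Longrightarrow> sp_add f g \<in> subalg G"
| mult: "f \<in> subalg G \<Longrightarrow> g \<in> subalg G \<Longrightarrow> sp_mult f g \<in> subalg G"

definition Zgens :: "nat \<Rightarrow> sp set" where
  "Zgens m = {zgen i I | i I. 1 \<le> i \<and> i \<le> 6 \<and> I \<subseteq> {1..m} \<and> card I \<le> 3}"

text \<open>f represents an S_3-invariant class of K(m)\<close>
definition invariant_class :: "nat \<Rightarrow> sp \<Rightarrow> bool" where
  "invariant_class m f \<longleftrightarrow>
     (\<forall>\<sigma>. \<sigma> permutes {0,1,2} \<longrightarrow> sp_sub (act \<sigma> f) f \<in> Jideal m)"

end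

theory Submission
  imports Defs
begin

text \<open>
  The proof averages over \<open>\<SS>\<^sub>3\<close>. Since \<open>J\<close> is \<open>\<SS>\<^sub>3\<close>-stable, an invariant class \<open>f\<close> is
  congruent to its average \<open>1/6 \<Sum>\<^sub>\<sigma> \<sigma> f\<close>; conversely the \<open>z(i, I)\<close> are invariant. Neither the
  particular generators of \<open>J\<close> nor \<open>m \<ge> 1\<close> play any further role.

  Write \<open>L\<^sub>0(d, I) = x^d \<alpha>\<^sub>I\<close>, \<open>L\<^sub>1(d, I) = y^d \<beta>\<^sub>I\<close>, \<open>L\<^sub>2(d, I) = w^d \<gamma>\<^sub>I\<close>, so that
  \<open>z(d+1, I) = L\<^sub>0(d, I) + L\<^sub>1(d, I) + L\<^sub>2(d, I)\<close>. Up to a sign, a monomial is a product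
  \<open>L\<^sub>0(u\<^sub>0) L\<^sub>1(u\<^sub>1) L\<^sub>2(u\<^sub>2)\<close>, so its average is a sum of \<open>L\<^sub>a(u\<^sub>0) L\<^sub>b(u\<^sub>1) L\<^sub>c(u\<^sub>2)\<close> over
  distinct \<open>a, b, c\<close>; by inclusion-exclusion over coinciding indices this is a polynomial in the
  \<open>z\<close>'s. Finally, if \<open>d \<ge> 6\<close> or \<open>|I| \<ge> 4\<close>, then \<open>(d, I)\<close> splits into four parts of positive
  weight \<open>d + |I|\<close>. Multiplying the distinct-index sum of three of them by the \<open>z\<close> of the fourth,
  the fourth index must repeat one of the other three, and this expresses \<open>6 z(d+1, I)\<close>
  through \<open>z\<close>'s of smaller weight.
\<close>

section \<open>Multiplication of monomials\<close>

definition mono_mult :: "mono \<Rightarrow> mono \<Rightarrow> mono" where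
  "mono_mult p q = (\<lambda>k. fst p k + fst q k, snd p \<union> snd q)"

definition mono_coeff :: "mono \<Rightarrow> mono \<Rightarrow> rat" where
  "mono_coeff p q = (if snd p \<inter> snd q = {} then mono_sign (snd p) (snd q) else 0)"

definition mono_one :: mono where
  "mono_one = (\<lambda>_. 0, {})"

lemma fst_mono_one [simp]: "fst mono_one = (\<lambda>_. 0)"
  and snd_mono_one [simp]: "snd mono_one = {}"
  by (simp_all add: mono_one_def)

lemma mono_times_eq: "mono_times p q = (\<lambda>r. if r = mono_mult p q then mono_coeff p q else 0)"
  by (auto simp: mono_times_def mono_mult_def mono_coeff_def fun_eq_iff)

lemma mono_mult_assoc: "mono_mult (mono_mult p q) s = mono_mult p (mono_mult q s)"
  by (simp add: mono_mult_def add.assoc Un_assoc)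

lemma mono_mult_commute: "mono_mult p q = mono_mult q p"
  by (simp add: mono_mult_def add.commute Un_commute)

lemma mono_mult_one_left [simp]: "mono_mult mono_one q = q"
  and mono_mult_one_right [simp]: "mono_mult q mono_one = q"
  by (auto simp: mono_mult_def mono_one_def)

lemma mono_coeff_one_left [simp]: "mono_coeff mono_one q = 1"
  and mono_coeff_one_right [simp]: "mono_coeff q mono_one = 1"
  by (auto simp: mono_coeff_def mono_one_def mono_sign_def)

definition inversions :: "'a::linorder set \<Rightarrow> 'a set \<Rightarrow> ('a \<times> 'a) set" where
  "inversions S T = {(s, t). s \<in> S \<and> t \<in> T \<and> t < s}"

lemma mono_sign_inversions: "mono_sign S T = (-1) ^ card (inversions S T)"
  by (simp add: mono_sign_def inversions_def)

lemma finite_inversions: "finite S \<Longrightarrow> finite T \<Longrightarrow> finite (inversions S T)"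
  by (rule finite_subset[of _ "S \<times> T"]) (auto simp: inversions_def)

lemma mono_sign_Un_left:
  assumes "finite S" "finite T" "finite U" "S \<inter> T = {}"
  shows "mono_sign (S \<union> T) U = mono_sign S U * mono_sign T U"
proof -
  have "inversions (S \<union> T) U = inversions S U \<union> inversions T U"
    and "inversions S U \<inter> inversions T U = {}"
    using assms(4) by (auto simp: inversions_def)
  then show ?thesis
    using assms by (simp add: mono_sign_inversions card_Un_disjoint finite_inversions power_add)
qed

lemma mono_sign_Un_right:
  assumes "finite S" "finite T" "finite U" "T \<inter> U = {}"
  shows "mono_sign S (T \<union> U) = mono_sign S T * mono_sign S U"
proof -
  have "inversions S (T \<union> U) = inversions S T \<union> inversions S U"
    and "inversions S T \<inter> inversions S U = {}"
    using assms(4) by (auto simp: inversions_def)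
  then show ?thesis
    using assms by (simp add: mono_sign_inversions card_Un_disjoint finite_inversions power_add)
qed

text \<open>Every pair of \<open>S \<times> T\<close> is an inversion of exactly one of \<open>(S, T)\<close> and \<open>(T, S)\<close>.\<close>

lemma mono_sign_swap:
  assumes "finite S" "finite T" "S \<inter> T = {}"
  shows "mono_sign S T * mono_sign T S = (-1) ^ (card S * card T)"
proof -
  let ?flip = "\<lambda>(a, b). (b, a)"
  have "S \<times> T = inversions S T \<union> ?flip ` inversions T S"
    using assms(3) by (auto simp: inversions_def image_iff) (metis disjoint_iff linorder_neqE)
  moreover have "inversions S T \<inter> ?flip ` inversions T S = {}"
    by (auto simp: inversions_def)
  moreover have "card (?flip ` inversions T S) = card (inversions T S)"
    by (rule card_image) (auto simp: inj_on_def)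
  ultimately have "card (inversions S T) + card (inversions T S) = card S * card T"
    using assms by (metis card_Un_disjoint card_cartesian_product finite_imageI finite_inversions)
  then show ?thesis by (simp add: mono_sign_inversions flip: power_add)
qed

lemma mono_coeff_assoc:
  assumes "finite (snd p)" "finite (snd q)" "finite (snd s)"
  shows "mono_coeff p q * mono_coeff (mono_mult p q) s = mono_coeff q s * mono_coeff p (mono_mult q s)"
  using assms
  by (auto simp: mono_coeff_def mono_mult_def Int_Un_distrib Int_Un_distrib2
      mono_sign_Un_left mono_sign_Un_right)

lemma mono_coeff_swap:
  assumes "finite (snd p)" "finite (snd q)"
  shows "mono_coeff p q = (-1) ^ (card (snd p) * card (snd q)) * mono_coeff q p"
proof (cases "snd p \<inter> snd q = {}")
  case True
  have "mono_coeff q p * mono_coeff q p = 1"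
    using True by (simp add: mono_coeff_def mono_sign_def Int_commute flip: power_mult_distrib)
  moreover have "mono_coeff p q * mono_coeff q p = (-1) ^ (card (snd p) * card (snd q))"
    using True assms mono_sign_swap by (simp add: mono_coeff_def Int_commute)
  ultimately show ?thesis by (metis mult.assoc mult.right_neutral)
next
  case False
  then show ?thesis by (auto simp: mono_coeff_def Int_commute)
qed

section \<open>The ring of finitely supported elements\<close>

definition fsp_set :: "sp set" where
  "fsp_set = {f. finite (sp_supp f) \<and> (\<forall>p\<in>sp_supp f. finite (snd p))}"

lemma sp_supp_mult: "sp_supp (sp_mult f g) \<subseteq> (\<lambda>(p, q). mono_mult p q) ` (sp_supp f \<times> sp_supp g)"
proof
  fix r assume "r \<in> sp_supp (sp_mult f g)"
  then have "(\<Sum>(p, q) \<in> sp_supp f \<times> sp_supp g. f p * g q * mono_times p q r) \<noteq> 0"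
    by (simp add: sp_supp_def sp_mult_def)
  then obtain p q where "(p, q) \<in> sp_supp f \<times> sp_supp g" "f p * g q * mono_times p q r \<noteq> 0"
    by (metis (no_types, lifting) case_prod_conv sum.not_neutral_contains_not_neutral surj_pair)
  then show "r \<in> (\<lambda>(p, q). mono_mult p q) ` (sp_supp f \<times> sp_supp g)"
    by (auto simp: mono_times_eq split: if_splits)
qed

lemma sp_supp_add: "sp_supp (sp_add f g) \<subseteq> sp_supp f \<union> sp_supp g"
  by (auto simp: sp_supp_def sp_add_def)

lemma sp_supp_sub: "sp_supp (sp_sub f g) \<subseteq> sp_supp f \<union> sp_supp g"
  by (auto simp: sp_supp_def sp_sub_def)

lemma sp_supp_basis: "sp_supp (sp_basis p) = {p}"
  by (auto simp: sp_supp_def sp_basis_def)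

lemma fsp_set_mult:
  assumes "f \<in> fsp_set" "g \<in> fsp_set"
  shows "sp_mult f g \<in> fsp_set"
proof -
  have "finite ((\<lambda>(p, q). mono_mult p q) ` (sp_supp f \<times> sp_supp g))"
    using assms by (simp add: fsp_set_def)
  moreover have "finite (snd r)" if r: "r \<in> sp_supp (sp_mult f g)" for r
  proof -
    obtain p q where "p \<in> sp_supp f" "q \<in> sp_supp g" "r = mono_mult p q"
      using r sp_supp_mult[of f g] by auto
    then show ?thesis using assms by (auto simp: fsp_set_def mono_mult_def)
  qed
  ultimately show ?thesis
    using sp_supp_mult[of f g] by (auto simp: fsp_set_def intro: finite_subset)
qed

lemma fsp_set_add: "f \<in> fsp_set \<Longrightarrow> g \<in> fsp_set \<Longrightarrow> sp_add f g \<in> fsp_set"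
  using sp_supp_add[of f g] by (auto simp: fsp_set_def intro: finite_subset)

lemma fsp_set_sub: "f \<in> fsp_set \<Longrightarrow> g \<in> fsp_set \<Longrightarrow> sp_sub f g \<in> fsp_set"
  using sp_supp_sub[of f g] by (auto simp: fsp_set_def intro: finite_subset)

lemma fsp_set_uminus: "f \<in> fsp_set \<Longrightarrow> (\<lambda>r. - f r) \<in> fsp_set"
  by (auto simp: fsp_set_def sp_supp_def)

lemma fsp_set_smult: "f \<in> fsp_set \<Longrightarrow> sp_smult c f \<in> fsp_set"
  by (auto simp: fsp_set_def sp_supp_def sp_smult_def intro: finite_subset)

lemma fsp_set_zero: "(\<lambda>_. 0) \<in> fsp_set"
  by (auto simp: fsp_set_def sp_supp_def)

lemma fsp_set_basis: "finite (snd p) \<Longrightarrow> sp_basis p \<in> fsp_set"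
  by (auto simp: fsp_set_def sp_supp_basis)

lemma fsp_set_one: "sp_one \<in> fsp_set"
  by (simp add: sp_one_def fsp_set_basis)

lemma sp_mult_eq_double_sum:
  assumes "finite F" "finite G" "sp_supp f \<subseteq> F" "sp_supp g \<subseteq> G"
  shows "sp_mult f g r = (\<Sum>p\<in>F. \<Sum>q\<in>G. f p * g q * mono_times p q r)"
proof -
  have "sp_mult f g r = (\<Sum>(p, q) \<in> F \<times> G. f p * g q * mono_times p q r)"
    unfolding sp_mult_def
    by (rule sum.mono_neutral_left) (use assms in \<open>auto simp: sp_supp_def\<close>)
  then show ?thesis by (simp add: sum.cartesian_product)
qed

lemma sum_mono_times_collapse:
  assumes "finite U" "mono_mult p q \<in> U"
  shows "(\<Sum>u\<in>U. mono_times p q u * Y u) = mono_coeff p q * Y (mono_mult p q)"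
proof -
  have "(\<Sum>u\<in>U. mono_times p q u * Y u) = (\<Sum>u\<in>U. if u = mono_mult p q then mono_coeff p q * Y u else 0)"
    by (rule sum.cong) (auto simp: mono_times_eq)
  also have "\<dots> = mono_coeff p q * Y (mono_mult p q)" using assms by (simp add: sum.delta')
  finally show ?thesis .
qed

lemma sum_rotate3:
  "(\<Sum>u\<in>U. \<Sum>a\<in>A. \<Sum>b\<in>B. G u a b) = (\<Sum>a\<in>A. \<Sum>b\<in>B. \<Sum>u\<in>U. (G u a b :: 'a::comm_monoid_add))"
  by (simp add: sum.swap[of _ U A] sum.swap[of _ U B])

lemma sp_mult_mult_left_expand:
  assumes "f \<in> fsp_set" "g \<in> fsp_set" "h \<in> fsp_set"
  defines "Sf \<equiv> sp_supp f" and "Sg \<equiv> sp_supp g" and "Sh \<equiv> sp_supp h"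
  shows "sp_mult (sp_mult f g) h r = (\<Sum>p\<in>Sf. \<Sum>q\<in>Sg. \<Sum>s\<in>Sh.
    f p * g q * h s * (mono_coeff p q * mono_times (mono_mult p q) s r))"
proof -
  define U where "U = (\<lambda>(p, q). mono_mult p q) ` (Sf \<times> Sg)"
  have fin: "finite Sf" "finite Sg" "finite Sh" "finite U"
    using assms by (auto simp: fsp_set_def U_def)
  have fg: "sp_mult f g u = (\<Sum>p\<in>Sf. \<Sum>q\<in>Sg. f p * g q * mono_times p q u)" for u
    by (rule sp_mult_eq_double_sum) (use fin in \<open>auto simp: Sf_def Sg_def\<close>)
  have "sp_mult (sp_mult f g) h r = (\<Sum>u\<in>U. \<Sum>s\<in>Sh. sp_mult f g u * h s * mono_times u s r)"
    by (rule sp_mult_eq_double_sum) (use fin sp_supp_mult in \<open>auto simp: Sh_def U_def Sf_def Sg_def\<close>)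
  also have "\<dots> = (\<Sum>u\<in>U. \<Sum>s\<in>Sh. \<Sum>p\<in>Sf. \<Sum>q\<in>Sg. mono_times p q u * (f p * g q * h s * mono_times u s r))"
    unfolding fg by (simp add: sum_distrib_right sum_distrib_left mult_ac)
  also have "\<dots> = (\<Sum>p\<in>Sf. \<Sum>q\<in>Sg. \<Sum>s\<in>Sh. \<Sum>u\<in>U. mono_times p q u * (f p * g q * h s * mono_times u s r))"
    by (simp only: sum_rotate3[of _ _ Sh] sum.swap[of _ Sh Sg] sum.swap[of _ U Sf])
  also have "\<dots> = (\<Sum>p\<in>Sf. \<Sum>q\<in>Sg. \<Sum>s\<in>Sh. f p * g q * h s * (mono_coeff p q * mono_times (mono_mult p q) s r))"
    using fin by (intro sum.cong refl, subst sum_mono_times_collapse) (auto simp: U_def)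
  finally show ?thesis .
qed

lemma sp_mult_mult_right_expand:
  assumes "f \<in> fsp_set" "g \<in> fsp_set" "h \<in> fsp_set"
  defines "Sf \<equiv> sp_supp f" and "Sg \<equiv> sp_supp g" and "Sh \<equiv> sp_supp h"
  shows "sp_mult f (sp_mult g h) r = (\<Sum>p\<in>Sf. \<Sum>q\<in>Sg. \<Sum>s\<in>Sh.
    f p * g q * h s * (mono_coeff q s * mono_times p (mono_mult q s) r))"
proof -
  define V where "V = (\<lambda>(p, q). mono_mult p q) ` (Sg \<times> Sh)"
  have fin: "finite Sf" "finite Sg" "finite Sh" "finite V"
    using assms by (auto simp: fsp_set_def V_def)
  have gh: "sp_mult g h v = (\<Sum>q\<in>Sg. \<Sum>s\<in>Sh. g q * h s * mono_times q s v)" for v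
    by (rule sp_mult_eq_double_sum) (use fin in \<open>auto simp: Sh_def Sg_def\<close>)
  have "sp_mult f (sp_mult g h) r = (\<Sum>p\<in>Sf. \<Sum>v\<in>V. f p * sp_mult g h v * mono_times p v r)"
    by (rule sp_mult_eq_double_sum) (use fin sp_supp_mult in \<open>auto simp: Sf_def V_def Sg_def Sh_def\<close>)
  also have "\<dots> = (\<Sum>p\<in>Sf. \<Sum>v\<in>V. \<Sum>q\<in>Sg. \<Sum>s\<in>Sh. mono_times q s v * (f p * g q * h s * mono_times p v r))"
    unfolding gh by (simp add: sum_distrib_right sum_distrib_left mult_ac)
  also have "\<dots> = (\<Sum>p\<in>Sf. \<Sum>q\<in>Sg. \<Sum>s\<in>Sh. \<Sum>v\<in>V. mono_times q s v * (f p * g q * h s * mono_times p v r))"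
    by (rule sum.cong[OF refl]) (rule sum_rotate3)
  also have "\<dots> = (\<Sum>p\<in>Sf. \<Sum>q\<in>Sg. \<Sum>s\<in>Sh. f p * g q * h s * (mono_coeff q s * mono_times p (mono_mult q s) r))"
    using fin by (intro sum.cong refl, subst sum_mono_times_collapse) (auto simp: V_def)
  finally show ?thesis .
qed

lemma sp_mult_assoc:
  assumes "f \<in> fsp_set" "g \<in> fsp_set" "h \<in> fsp_set"
  shows "sp_mult (sp_mult f g) h = sp_mult f (sp_mult g h)"
proof
  fix r
  have "mono_coeff p q * mono_times (mono_mult p q) s r = mono_coeff q s * mono_times p (mono_mult q s) r"
    if "p \<in> sp_supp f" "q \<in> sp_supp g" "s \<in> sp_supp h" for p q s
  proof -
    have "finite (snd p)" "finite (snd q)" "finite (snd s)"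
      using that assms by (auto simp: fsp_set_def)
    then show ?thesis by (simp add: mono_times_eq mono_mult_assoc mono_coeff_assoc)
  qed
  then show "sp_mult (sp_mult f g) h r = sp_mult f (sp_mult g h) r"
    unfolding sp_mult_mult_left_expand[OF assms] sp_mult_mult_right_expand[OF assms]
    by (intro sum.cong refl) simp
qed

lemma sp_mult_add_left:
  assumes "f \<in> fsp_set" "g \<in> fsp_set" "h \<in> fsp_set"
  shows "sp_mult (sp_add f g) h = sp_add (sp_mult f h) (sp_mult g h)"
proof
  fix r
  define F where "F = sp_supp f \<union> sp_supp g"
  have fin: "finite F" "finite (sp_supp h)" using assms by (auto simp: fsp_set_def F_def)
  have "sp_mult u h r = (\<Sum>p\<in>F. \<Sum>q\<in>sp_supp h. u p * h q * mono_times p q r)"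
    if "sp_supp u \<subseteq> F" for u
    using fin that by (intro sp_mult_eq_double_sum) auto
  moreover have "sp_supp (sp_add f g) \<subseteq> F" "sp_supp f \<subseteq> F" "sp_supp g \<subseteq> F"
    using sp_supp_add by (auto simp: F_def)
  ultimately show "sp_mult (sp_add f g) h r = sp_add (sp_mult f h) (sp_mult g h) r"
    by (simp add: sp_add_def sum.distrib[symmetric] algebra_simps)
qed

lemma sp_mult_add_right:
  assumes "f \<in> fsp_set" "g \<in> fsp_set" "h \<in> fsp_set"
  shows "sp_mult h (sp_add f g) = sp_add (sp_mult h f) (sp_mult h g)"
proof
  fix r
  define F where "F = sp_supp f \<union> sp_supp g"
  have fin: "finite F" "finite (sp_supp h)" using assms by (auto simp: fsp_set_def F_def)
  have "sp_mult h u r = (\<Sum>q\<in>sp_supp h. \<Sum>p\<in>F. h q * u p * mono_times q p r)"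
    if "sp_supp u \<subseteq> F" for u
    using fin that by (intro sp_mult_eq_double_sum) auto
  moreover have "sp_supp (sp_add f g) \<subseteq> F" "sp_supp f \<subseteq> F" "sp_supp g \<subseteq> F"
    using sp_supp_add by (auto simp: F_def)
  ultimately show "sp_mult h (sp_add f g) r = sp_add (sp_mult h f) (sp_mult h g) r"
    by (simp add: sp_add_def sum.distrib[symmetric] algebra_simps)
qed

lemma sp_supp_smult_one: "sp_supp (sp_smult c sp_one) \<subseteq> {mono_one}"
  by (auto simp: sp_supp_def sp_smult_def sp_one_def sp_basis_def mono_one_def)

lemma sp_mult_smult_one_left:
  assumes "f \<in> fsp_set"
  shows "sp_mult (sp_smult c sp_one) f = sp_smult c f"
proof
  fix r
  have fin: "finite (sp_supp f)" using assms by (simp add: fsp_set_def)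
  have "sp_mult (sp_smult c sp_one) f r
      = (\<Sum>p\<in>{mono_one}. \<Sum>q\<in>sp_supp f. sp_smult c sp_one p * f q * mono_times p q r)"
    by (rule sp_mult_eq_double_sum) (use fin sp_supp_smult_one in auto)
  also have "\<dots> = (\<Sum>q\<in>sp_supp f. if q = r then c * f q else 0)"
    by (auto simp: sp_smult_def sp_one_def sp_basis_def mono_one_def[symmetric] mono_times_eq
        intro!: sum.cong)
  also have "\<dots> = sp_smult c f r" using fin by (simp add: sum.delta' sp_supp_def sp_smult_def)
  finally show "sp_mult (sp_smult c sp_one) f r = sp_smult c f r" .
qed

lemma sp_mult_smult_one_right:
  assumes "f \<in> fsp_set"
  shows "sp_mult f (sp_smult c sp_one) = sp_smult c f"
proof
  fix r
  have fin: "finite (sp_supp f)" using assms by (simp add: fsp_set_def)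
  have "sp_mult f (sp_smult c sp_one) r
      = (\<Sum>q\<in>sp_supp f. \<Sum>p\<in>{mono_one}. f q * sp_smult c sp_one p * mono_times q p r)"
    by (rule sp_mult_eq_double_sum) (use fin sp_supp_smult_one in auto)
  also have "\<dots> = (\<Sum>q\<in>sp_supp f. if q = r then c * f q else 0)"
    by (auto simp: sp_smult_def sp_one_def sp_basis_def mono_one_def[symmetric] mono_times_eq
        intro!: sum.cong)
  also have "\<dots> = sp_smult c f r" using fin by (simp add: sum.delta' sp_supp_def sp_smult_def)
  finally show "sp_mult f (sp_smult c sp_one) r = sp_smult c f r" .
qed

lemma sp_smult_1 [simp]: "sp_smult 1 f = f"
  by (simp add: sp_smult_def)

typedef fsp = fsp_set
  using fsp_set_zero by blast

setup_lifting type_definition_fsp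

instantiation fsp :: ring_1
begin

lift_definition zero_fsp :: fsp is "\<lambda>_. 0" by (rule fsp_set_zero)
lift_definition one_fsp :: fsp is sp_one by (rule fsp_set_one)
lift_definition plus_fsp :: "fsp \<Rightarrow> fsp \<Rightarrow> fsp" is sp_add by (rule fsp_set_add)
lift_definition minus_fsp :: "fsp \<Rightarrow> fsp \<Rightarrow> fsp" is sp_sub by (rule fsp_set_sub)
lift_definition uminus_fsp :: "fsp \<Rightarrow> fsp" is "\<lambda>f r. - f r" by (rule fsp_set_uminus)
lift_definition times_fsp :: "fsp \<Rightarrow> fsp \<Rightarrow> fsp" is sp_mult by (rule fsp_set_mult)

instance
proof
  fix a b c :: fsp
  show "a * b * c = a * (b * c)" by transfer (rule sp_mult_assoc)
  show "a + b + c = a + (b + c)" by transfer (simp add: sp_add_def add.assoc)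
  show "a + b = b + a" by transfer (simp add: sp_add_def add.commute)
  show "0 + a = a" by transfer (simp add: sp_add_def)
  show "- a + a = 0" by transfer (simp add: sp_add_def)
  show "a - b = a + - b" by transfer (simp add: sp_add_def sp_sub_def)
  show "(a + b) * c = a * c + b * c" by transfer (rule sp_mult_add_left)
  show "a * (b + c) = a * b + a * c" by transfer (rule sp_mult_add_right)
  show "1 * a = a" by transfer (metis sp_mult_smult_one_left sp_smult_1)
  show "a * 1 = a" by transfer (metis sp_mult_smult_one_right sp_smult_1)
  show "(0::fsp) \<noteq> 1" by transfer (metis sp_one_def sp_basis_def zero_neq_one)
qed

end

section \<open>Ordered products of anticommuting elements\<close>

lemma minus_one_power_commute: "(-1::'a::ring_1) ^ n * x = x * (-1) ^ n"
  by (cases "even n") simp_all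

lemma minus_one_power_left_commute: "x * ((-1::'a::ring_1) ^ n * y) = (-1) ^ n * (x * y)"
  by (metis minus_one_power_commute mult.assoc)

lemma sorted_list_of_set_insert_min:
  assumes "finite A" "\<forall>x\<in>A. a < x"
  shows "sorted_list_of_set (insert a A) = a # sorted_list_of_set A"
proof -
  have "Min (insert a A) = a" using assms by (auto intro!: Min_eqI)
  moreover have "insert a A - {a} = A" using assms(2) by blast
  ultimately show ?thesis using sorted_list_of_set_nonempty[of "insert a A"] assms(1) by simp
qed

definition ordered_prod :: "('b::linorder \<Rightarrow> 'a::ring_1) \<Rightarrow> 'b set \<Rightarrow> 'a" where
  "ordered_prod \<theta> S = prod_list (map \<theta> (sorted_list_of_set S))"

lemma ordered_prod_empty [simp]: "ordered_prod \<theta> {} = 1"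
  by (simp add: ordered_prod_def)

lemma ordered_prod_insert_min:
  assumes "finite A" "\<forall>x\<in>A. a < x"
  shows "ordered_prod \<theta> (insert a A) = \<theta> a * ordered_prod \<theta> A"
  using sorted_list_of_set_insert_min[OF assms] by (simp add: ordered_prod_def)

locale anticommuting =
  fixes \<theta> :: "'b::linorder \<Rightarrow> 'a::ring_1"
  assumes anticommute: "x \<noteq> y \<Longrightarrow> \<theta> x * \<theta> y = - (\<theta> y * \<theta> x)"
    and square_zero: "\<theta> x * \<theta> x = 0"
begin

lemma mult_ordered_prod:
  assumes "finite U"
  shows "\<theta> a * ordered_prod \<theta> U
    = (if a \<in> U then 0 else (-1) ^ card {u\<in>U. u < a} * ordered_prod \<theta> (insert a U))"
  using assms
proof (induction U rule: finite_linorder_min_induct)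
  case empty
  then show ?case using ordered_prod_insert_min[of "{}" a \<theta>] by simp
next
  case (insert b A)
  have Ob: "ordered_prod \<theta> (insert b A) = \<theta> b * ordered_prod \<theta> A"
    using ordered_prod_insert_min insert by blast
  consider "a = b" | "a < b" | "b < a" by fastforce
  then show ?case
  proof cases
    case 1
    then show ?thesis using Ob by (simp add: square_zero flip: mult.assoc)
  next
    case 2
    then have "ordered_prod \<theta> (insert a (insert b A)) = \<theta> a * ordered_prod \<theta> (insert b A)"
      using ordered_prod_insert_min insert by (metis finite_insert insert_iff order.strict_trans)
    moreover have "card {u \<in> insert b A. u < a} = 0" using 2 insert by auto
    moreover have "a \<notin> insert b A" using 2 insert by auto
    ultimately show ?thesis by (simp only: if_False power_0 mult_1)
  next
    case 3
    have swap: "\<theta> a * ordered_prod \<theta> (insert b A) = - (\<theta> b * (\<theta> a * ordered_prod \<theta> A))"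
      using anticommute[of a b] 3 by (simp add: Ob flip: mult.assoc)
    show ?thesis
    proof (cases "a \<in> A")
      case True
      then show ?thesis using swap insert.IH by simp
    next
      case False
      have "{u \<in> insert b A. u < a} = insert b {u \<in> A. u < a}" using 3 by auto
      moreover have "b \<notin> {u \<in> A. u < a}" using insert by auto
      ultimately have card: "card {u \<in> insert b A. u < a} = Suc (card {u \<in> A. u < a})"
        using insert by simp
      have "\<theta> b * ordered_prod \<theta> (insert a A) = ordered_prod \<theta> (insert a (insert b A))"
        using ordered_prod_insert_min[of "insert a A" b \<theta>] 3 insert by (simp add: insert_commute)
      then show ?thesis
        using swap insert.IH False 3 card
        by (simp add: minus_one_power_left_commute less_imp_neq[of b a, symmetric])
    qed
  qed
qed

lemma ordered_prod_mult:
  assumes "finite S" "finite T"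
  shows "ordered_prod \<theta> S * ordered_prod \<theta> T
    = (if S \<inter> T = {} then (-1) ^ card (inversions S T) * ordered_prod \<theta> (S \<union> T) else 0)"
  using assms
proof (induction S rule: finite_linorder_min_induct)
  case empty
  then show ?case by (simp add: inversions_def)
next
  case (insert a A)
  have Oa: "ordered_prod \<theta> (insert a A) = \<theta> a * ordered_prod \<theta> A"
    using ordered_prod_insert_min insert by blast
  show ?case
  proof (cases "A \<inter> T = {}")
    case False
    then show ?thesis using Oa insert by (auto simp: mult.assoc)
  next
    case AT: True
    have IH: "ordered_prod \<theta> (insert a A) * ordered_prod \<theta> T
        = (-1) ^ card (inversions A T) * (\<theta> a * ordered_prod \<theta> (A \<union> T))"
      using insert AT by (simp add: Oa mult.assoc minus_one_power_left_commute)
    show ?thesis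
    proof (cases "a \<in> T")
      case True
      then show ?thesis using IH mult_ordered_prod[of "A \<union> T" a] insert by auto
    next
      case False
      have aA: "a \<notin> A" using insert by auto
      have "inversions (insert a A) T = inversions A T \<union> (\<lambda>t. (a, t)) ` {t \<in> T. t < a}"
        and "inversions A T \<inter> (\<lambda>t. (a, t)) ` {t \<in> T. t < a} = {}"
        using aA by (auto simp: inversions_def)
      then have "card (inversions (insert a A) T) = card (inversions A T) + card {t \<in> T. t < a}"
        using insert by (simp add: card_Un_disjoint card_image inj_on_def finite_inversions)
      moreover have "{u \<in> A \<union> T. u < a} = {t \<in> T. t < a}" using insert by auto
      ultimately show ?thesis using IH mult_ordered_prod[of "A \<union> T" a] insert False aA AT
        by (simp add: power_add mult.assoc)
    qed
  qed
qed

end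

section \<open>Scalars, monomials and linear extension\<close>

definition scalar :: "rat \<Rightarrow> fsp" where
  "scalar c = Abs_fsp (sp_smult c sp_one)"

definition monom :: "mono \<Rightarrow> fsp" where
  "monom p = Abs_fsp (sp_basis p)"

definition evar :: "nat \<Rightarrow> fsp" where
  "evar k = Abs_fsp (evgen k)"

definition ovar :: "nat \<Rightarrow> nat \<Rightarrow> fsp" where
  "ovar j k = Abs_fsp (oddgen j k)"

lemmas Rep_fsp_mult = times_fsp.rep_eq
lemmas Rep_fsp_add = plus_fsp.rep_eq
lemmas Rep_fsp_diff = minus_fsp.rep_eq
lemmas Rep_fsp_one = one_fsp.rep_eq
lemmas Rep_fsp_zero = zero_fsp.rep_eq

lemma Rep_fsp_scalar: "Rep_fsp (scalar c) = sp_smult c sp_one"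
  by (simp add: scalar_def Abs_fsp_inverse fsp_set_smult fsp_set_one)

lemma Rep_fsp_monom: "finite (snd p) \<Longrightarrow> Rep_fsp (monom p) = sp_basis p"
  by (simp add: monom_def Abs_fsp_inverse fsp_set_basis)

lemma evar_monom: "evar k = monom (\<lambda>i. if i = k then 1 else 0, {})"
  by (simp add: evar_def monom_def evgen_def)

lemma ovar_monom: "ovar j k = monom (\<lambda>_. 0, {(j, k)})"
  by (simp add: ovar_def monom_def oddgen_def)

lemma one_monom: "1 = monom mono_one"
  using Rep_fsp_inject by (fastforce simp: Rep_fsp_one Rep_fsp_monom mono_one_def sp_one_def)

lemma Rep_fsp_scalar_mult: "Rep_fsp (scalar c * a) = sp_smult c (Rep_fsp a)"
  by (simp add: Rep_fsp_mult Rep_fsp_scalar sp_mult_smult_one_left Rep_fsp)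

lemma Rep_fsp_mult_scalar: "Rep_fsp (a * scalar c) = sp_smult c (Rep_fsp a)"
  by (simp add: Rep_fsp_mult Rep_fsp_scalar sp_mult_smult_one_right Rep_fsp)

lemma scalar_commute: "scalar c * a = a * scalar c"
  using Rep_fsp_inject Rep_fsp_scalar_mult Rep_fsp_mult_scalar by metis

lemma scalar_add: "scalar (a + b) = scalar a + scalar b"
  by (simp add: Rep_fsp_inject[symmetric] Rep_fsp_add Rep_fsp_scalar sp_add_def sp_smult_def
      fun_eq_iff algebra_simps)

lemma scalar_mult: "scalar (a * b) = scalar a * scalar b"
  by (simp add: Rep_fsp_inject[symmetric] Rep_fsp_scalar_mult Rep_fsp_scalar sp_smult_def fun_eq_iff)

lemma scalar_one [simp]: "scalar 1 = 1"
  by (simp add: Rep_fsp_inject[symmetric] Rep_fsp_scalar Rep_fsp_one)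

lemma scalar_zero [simp]: "scalar 0 = 0"
  by (simp add: Rep_fsp_inject[symmetric] Rep_fsp_scalar Rep_fsp_zero sp_smult_def)

lemma scalar_uminus: "scalar (- a) = - scalar a"
  by (simp add: Rep_fsp_inject[symmetric] Rep_fsp_scalar uminus_fsp.rep_eq sp_smult_def)

lemma scalar_of_nat: "scalar (of_nat n) = of_nat n"
  by (induction n) (simp_all add: scalar_add)

lemma scalar_numeral: "scalar (numeral n) = numeral n"
  using scalar_of_nat[of "numeral n"] by simp

lemma scalar_minus_one_power: "scalar ((-1) ^ n) = (-1) ^ n"
  by (induction n) (simp_all add: scalar_mult scalar_uminus)

lemma scalar_left_commute: "a * (scalar c * b) = scalar c * (a * b)"
  by (metis scalar_commute mult.assoc)

lemma scalar_mult_scalar: "scalar x * a * (scalar y * b) = scalar (x * y) * (a * b)"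
  by (simp only: mult.assoc scalar_left_commute[of a] scalar_mult)

lemma scalar_inverse_cancel: "c \<noteq> 0 \<Longrightarrow> scalar (1 / c) * (scalar c * a) = a"
  by (simp add: scalar_mult[symmetric] flip: mult.assoc)

lemma monom_mult:
  assumes "finite (snd p)" "finite (snd q)"
  shows "monom p * monom q = scalar (mono_coeff p q) * monom (mono_mult p q)"
proof -
  have "sp_mult (sp_basis p) (sp_basis q) = sp_smult (mono_coeff p q) (sp_basis (mono_mult p q))"
  proof
    fix r
    have "sp_mult (sp_basis p) (sp_basis q) r
        = (\<Sum>p'\<in>{p}. \<Sum>q'\<in>{q}. sp_basis p p' * sp_basis q q' * mono_times p' q' r)"
      by (rule sp_mult_eq_double_sum) (auto simp: sp_supp_basis)
    then show "sp_mult (sp_basis p) (sp_basis q) r = sp_smult (mono_coeff p q) (sp_basis (mono_mult p q)) r"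
      by (simp add: sp_basis_def sp_smult_def mono_times_eq)
  qed
  moreover have "finite (snd (mono_mult p q))" using assms by (simp add: mono_mult_def)
  ultimately have "Rep_fsp (monom p * monom q) = Rep_fsp (scalar (mono_coeff p q) * monom (mono_mult p q))"
    using assms by (simp only: Rep_fsp_scalar_mult) (simp only: Rep_fsp_mult Rep_fsp_monom)
  then show ?thesis by (simp only: Rep_fsp_inject)
qed

lemma monom_commute:
  assumes "finite (snd p)" "finite (snd q)"
  shows "monom p * monom q = scalar ((-1) ^ (card (snd p) * card (snd q))) * (monom q * monom p)"
proof -
  have "monom p * monom q = scalar (mono_coeff p q) * monom (mono_mult p q)"
    using assms by (rule monom_mult)
  also have "\<dots> = scalar ((-1) ^ (card (snd p) * card (snd q))) * (scalar (mono_coeff q p) * monom (mono_mult q p))"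
    using assms by (simp only: mono_mult_commute[of p q] mono_coeff_swap[of p q] scalar_mult mult.assoc)
  also have "scalar (mono_coeff q p) * monom (mono_mult q p) = monom q * monom p"
    using assms by (simp only: monom_mult)
  finally show ?thesis .
qed

lemma monom_even_mult: "monom (e, {}) * monom (e', {}) = monom (\<lambda>i. e i + e' i, {})"
  by (simp add: monom_mult mono_coeff_def mono_sign_def mono_mult_def)

lemma Rep_fsp_sum: "Rep_fsp (\<Sum>i\<in>I. g i) = (\<lambda>r. \<Sum>i\<in>I. Rep_fsp (g i) r)"
  by (induction I rule: infinite_finite_induct) (simp_all add: Rep_fsp_zero Rep_fsp_add sp_add_def)

lemma finite_sp_supp_Rep_fsp: "finite (sp_supp (Rep_fsp a))"
  using Rep_fsp[of a] by (simp add: fsp_set_def)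

lemma finite_odd_part_Rep_fsp: "p \<in> sp_supp (Rep_fsp a) \<Longrightarrow> finite (snd p)"
  using Rep_fsp[of a] by (simp add: fsp_set_def)

lemma Rep_fsp_scalar_monom: "finite (snd p) \<Longrightarrow> Rep_fsp (scalar c * monom p) r = (if r = p then c else 0)"
  by (simp add: Rep_fsp_scalar_mult Rep_fsp_monom sp_smult_def sp_basis_def)

lemma monom_decomposition: "a = (\<Sum>p\<in>sp_supp (Rep_fsp a). scalar (Rep_fsp a p) * monom p)"
proof -
  have "Rep_fsp (\<Sum>p\<in>sp_supp (Rep_fsp a). scalar (Rep_fsp a p) * monom p) r = Rep_fsp a r" for r
  proof -
    have "Rep_fsp (\<Sum>p\<in>sp_supp (Rep_fsp a). scalar (Rep_fsp a p) * monom p) r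
        = (\<Sum>p\<in>sp_supp (Rep_fsp a). if r = p then Rep_fsp a p else 0)"
      unfolding Rep_fsp_sum by (intro sum.cong refl) (simp add: Rep_fsp_scalar_monom finite_odd_part_Rep_fsp)
    also have "\<dots> = Rep_fsp a r"
      using finite_sp_supp_Rep_fsp[of a] by (auto simp: sum.delta sp_supp_def)
    finally show ?thesis .
  qed
  then show ?thesis by (simp add: Rep_fsp_inject[symmetric] fun_eq_iff)
qed

lemma monom_even_central: "monom (e, {}) * a = a * monom (e, {})"
proof -
  have comm: "monom (e, {}) * (scalar c * monom p) = (scalar c * monom p) * monom (e, {})"
    if "finite (snd p)" for c p
    using monom_commute[of "(e, {})" p] that by (simp add: scalar_left_commute mult.assoc)
  have "monom (e, {}) * a = (\<Sum>p\<in>sp_supp (Rep_fsp a). monom (e, {}) * (scalar (Rep_fsp a p) * monom p))"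
    by (subst monom_decomposition[of a]) (simp add: sum_distrib_left)
  also have "\<dots> = (\<Sum>p\<in>sp_supp (Rep_fsp a). (scalar (Rep_fsp a p) * monom p) * monom (e, {}))"
    by (intro sum.cong refl) (simp add: comm finite_odd_part_Rep_fsp)
  also have "\<dots> = a * monom (e, {})"
    by (subst (2) monom_decomposition[of a]) (simp add: sum_distrib_right)
  finally show ?thesis .
qed

definition lin_ext :: "(mono \<Rightarrow> fsp) \<Rightarrow> fsp \<Rightarrow> fsp" where
  "lin_ext \<Psi> a = (\<Sum>p\<in>sp_supp (Rep_fsp a). scalar (Rep_fsp a p) * \<Psi> p)"

lemma lin_ext_superset:
  assumes "finite F" "sp_supp (Rep_fsp a) \<subseteq> F"
  shows "lin_ext \<Psi> a = (\<Sum>p\<in>F. scalar (Rep_fsp a p) * \<Psi> p)"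
  unfolding lin_ext_def
  by (rule sum.mono_neutral_left) (use assms in \<open>auto simp: sp_supp_def\<close>)

lemma lin_ext_add: "lin_ext \<Psi> (a + b) = lin_ext \<Psi> a + lin_ext \<Psi> b"
proof -
  define F where "F = sp_supp (Rep_fsp a) \<union> sp_supp (Rep_fsp b)"
  have "finite F" by (simp add: F_def finite_sp_supp_Rep_fsp)
  moreover have "sp_supp (Rep_fsp (a + b)) \<subseteq> F"
    unfolding F_def Rep_fsp_add by (rule sp_supp_add)
  ultimately have "lin_ext \<Psi> (a + b) = (\<Sum>p\<in>F. scalar (Rep_fsp (a + b) p) * \<Psi> p)"
    by (rule lin_ext_superset)
  also have "\<dots> = (\<Sum>p\<in>F. scalar (Rep_fsp a p) * \<Psi> p) + (\<Sum>p\<in>F. scalar (Rep_fsp b p) * \<Psi> p)"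
    by (simp add: Rep_fsp_add sp_add_def scalar_add distrib_right sum.distrib)
  also have "\<dots> = lin_ext \<Psi> a + lin_ext \<Psi> b"
    by (simp add: lin_ext_superset[OF \<open>finite F\<close>] F_def)
  finally show ?thesis .
qed

lemma lin_ext_zero: "lin_ext \<Psi> 0 = 0"
  by (simp add: lin_ext_def Rep_fsp_zero sp_supp_def)

lemma lin_ext_sum: "lin_ext \<Psi> (\<Sum>i\<in>I. g i) = (\<Sum>i\<in>I. lin_ext \<Psi> (g i))"
  by (induction I rule: infinite_finite_induct) (simp_all add: lin_ext_zero lin_ext_add)

lemma lin_ext_scalar_monom:
  assumes "finite (snd p)"
  shows "lin_ext \<Psi> (scalar c * monom p) = scalar c * \<Psi> p"
proof -
  have "sp_supp (Rep_fsp (scalar c * monom p)) \<subseteq> {p}"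
    using assms by (auto simp: sp_supp_def Rep_fsp_scalar_monom split: if_splits)
  then show ?thesis using lin_ext_superset[of "{p}"] assms by (simp add: Rep_fsp_scalar_monom)
qed

lemma lin_ext_monom: "finite (snd p) \<Longrightarrow> lin_ext \<Psi> (monom p) = \<Psi> p"
  using lin_ext_scalar_monom[of p \<Psi> 1] by simp

lemma lin_ext_mult:
  assumes hom: "\<And>p q. finite (snd p) \<Longrightarrow> finite (snd q)
      \<Longrightarrow> \<Psi> p * \<Psi> q = scalar (mono_coeff p q) * \<Psi> (mono_mult p q)"
  shows "lin_ext \<Psi> (a * b) = lin_ext \<Psi> a * lin_ext \<Psi> b"
proof -
  define Sa Sb where "Sa = sp_supp (Rep_fsp a)" and "Sb = sp_supp (Rep_fsp b)"
  have fa: "\<And>p. p \<in> Sa \<Longrightarrow> finite (snd p)" and fb: "\<And>q. q \<in> Sb \<Longrightarrow> finite (snd q)"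
    by (auto simp: Sa_def Sb_def finite_odd_part_Rep_fsp)
  have "a * b = (\<Sum>p\<in>Sa. scalar (Rep_fsp a p) * monom p) * (\<Sum>q\<in>Sb. scalar (Rep_fsp b q) * monom q)"
    using monom_decomposition[of a] monom_decomposition[of b] by (simp add: Sa_def Sb_def)
  also have "\<dots> = (\<Sum>p\<in>Sa. \<Sum>q\<in>Sb. scalar (Rep_fsp a p) * monom p * (scalar (Rep_fsp b q) * monom q))"
    by (subst sum_distrib_right) (simp only: sum_distrib_left)
  also have "\<dots> = (\<Sum>p\<in>Sa. \<Sum>q\<in>Sb. scalar (Rep_fsp a p * Rep_fsp b q * mono_coeff p q) * monom (mono_mult p q))"
    by (intro sum.cong refl) (simp only: scalar_mult_scalar, simp add: monom_mult fa fb scalar_mult mult.assoc)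
  finally have ab: "a * b = \<dots>" .
  have "lin_ext \<Psi> (a * b)
      = (\<Sum>p\<in>Sa. \<Sum>q\<in>Sb. scalar (Rep_fsp a p * Rep_fsp b q * mono_coeff p q) * \<Psi> (mono_mult p q))"
    unfolding ab lin_ext_sum by (intro sum.cong refl) (simp add: lin_ext_scalar_monom fa fb mono_mult_def)
  also have "\<dots> = (\<Sum>p\<in>Sa. \<Sum>q\<in>Sb. scalar (Rep_fsp a p) * \<Psi> p * (scalar (Rep_fsp b q) * \<Psi> q))"
    by (intro sum.cong refl) (simp only: scalar_mult_scalar, simp add: hom fa fb scalar_mult mult.assoc)
  also have "\<dots> = lin_ext \<Psi> a * lin_ext \<Psi> b"
    unfolding lin_ext_def Sa_def[symmetric] Sb_def[symmetric]
    by (subst sum_distrib_right) (simp only: sum_distrib_left)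
  finally show ?thesis .
qed

section \<open>The action of permutations\<close>

lemma evar_power: "evar k ^ n = monom (\<lambda>i. if i = k then n else 0, {})"
proof (induction n)
  case 0
  then show ?case by (simp add: one_monom mono_one_def)
next
  case (Suc n)
  then show ?case by (simp add: evar_monom monom_even_mult) (rule arg_cong[where f = monom], auto)
qed

definition permute_exps :: "(nat \<Rightarrow> nat) \<Rightarrow> (nat \<Rightarrow> nat) \<Rightarrow> nat \<Rightarrow> nat" where
  "permute_exps \<sigma> e = (\<lambda>i. (if \<sigma> 0 = i then e 0 else 0) + (if \<sigma> 1 = i then e 1 else 0)
     + (if \<sigma> 2 = i then e 2 else 0))"

definition even_image :: "(nat \<Rightarrow> nat) \<Rightarrow> (nat \<Rightarrow> nat) \<Rightarrow> fsp" where
  "even_image \<sigma> e = prod_list (map (\<lambda>k. evar (\<sigma> k) ^ e k) [0, 1, 2])"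

lemma even_image_monom: "even_image \<sigma> e = monom (permute_exps \<sigma> e, {})"
  unfolding even_image_def
  by (simp add: evar_power monom_even_mult permute_exps_def) (rule arg_cong[where f = monom], auto)

lemma even_image_add: "even_image \<sigma> (\<lambda>k. e k + e' k) = even_image \<sigma> e * even_image \<sigma> e'"
  by (simp add: even_image_monom monom_even_mult permute_exps_def) (rule arg_cong[where f = monom], auto)

lemma even_image_central: "even_image \<sigma> e * a = a * even_image \<sigma> e"
  by (simp only: even_image_monom monom_even_central)

lemma even_image_zero: "even_image \<sigma> (\<lambda>_. 0) = 1"
  by (simp add: even_image_def)

definition ovar_image :: "(nat \<Rightarrow> nat) \<Rightarrow> nat \<times> nat \<Rightarrow> fsp" where
  "ovar_image \<sigma> = (\<lambda>(j, k). ovar j (\<sigma> k))"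

definition act_monom :: "(nat \<Rightarrow> nat) \<Rightarrow> mono \<Rightarrow> fsp" where
  "act_monom \<sigma> p = even_image \<sigma> (fst p) * ordered_prod (ovar_image \<sigma>) (snd p)"

lemma Rep_fsp_prod_list: "Rep_fsp (prod_list xs) = sp_prod_list (map Rep_fsp xs)"
  by (induction xs) (simp_all add: Rep_fsp_one Rep_fsp_mult sp_prod_list_def)

lemma Rep_fsp_power: "Rep_fsp (x ^ n) = sp_pow (Rep_fsp x) n"
  by (induction n) (simp_all add: Rep_fsp_one Rep_fsp_mult)

lemma Rep_fsp_evar: "Rep_fsp (evar k) = evgen k"
  by (simp add: evar_monom Rep_fsp_monom evgen_def)

lemma Rep_fsp_ovar: "Rep_fsp (ovar j k) = oddgen j k"
  by (simp add: ovar_monom Rep_fsp_monom oddgen_def)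

lemma Rep_fsp_act_monom: "Rep_fsp (act_monom \<sigma> p) = act_mono \<sigma> p"
proof -
  have "Rep_fsp \<circ> ovar_image \<sigma> = (\<lambda>(j, k). oddgen j (\<sigma> k))"
    by (auto simp: ovar_image_def Rep_fsp_ovar)
  then have "Rep_fsp (ordered_prod (ovar_image \<sigma>) S)
      = sp_prod_list (map (\<lambda>(j, k). oddgen j (\<sigma> k)) (sorted_list_of_set S))" for S
    by (simp only: ordered_prod_def Rep_fsp_prod_list map_map)
  moreover have "Rep_fsp (even_image \<sigma> e)
      = sp_prod_list (map (\<lambda>k. sp_pow (evgen (\<sigma> k)) (e k)) [0, 1, 2])" for e
    by (simp only: even_image_def Rep_fsp_prod_list map_map o_def Rep_fsp_power Rep_fsp_evar)
  ultimately show ?thesis by (simp only: act_monom_def Rep_fsp_mult act_mono_def)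
qed

lemma anticommuting_ovar_image:
  assumes "inj \<sigma>"
  shows "anticommuting (ovar_image \<sigma>)"
proof
  fix x y :: "nat \<times> nat"
  assume "x \<noteq> y"
  moreover obtain j k j' k' where xy: "x = (j, k)" "y = (j', k')" by fastforce
  ultimately have "{(j, \<sigma> k)} \<inter> {(j', \<sigma> k')} = {}" using assms by (auto simp: inj_eq)
  then show "ovar_image \<sigma> x * ovar_image \<sigma> y = - (ovar_image \<sigma> y * ovar_image \<sigma> x)"
    using monom_commute[of "(\<lambda>_. 0, {(j, \<sigma> k)})" "(\<lambda>_. 0, {(j', \<sigma> k')})"]
    by (simp add: ovar_image_def xy ovar_monom scalar_uminus)
next
  fix x :: "nat \<times> nat"
  show "ovar_image \<sigma> x * ovar_image \<sigma> x = 0"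
    by (simp add: ovar_image_def ovar_monom monom_mult mono_coeff_def split: prod.split)
qed

lemma act_monom_mult:
  assumes "inj \<sigma>" "finite (snd p)" "finite (snd q)"
  shows "act_monom \<sigma> p * act_monom \<sigma> q = scalar (mono_coeff p q) * act_monom \<sigma> (mono_mult p q)"
proof -
  have "act_monom \<sigma> p * act_monom \<sigma> q = even_image \<sigma> (fst p)
      * (ordered_prod (ovar_image \<sigma>) (snd p) * even_image \<sigma> (fst q)) * ordered_prod (ovar_image \<sigma>) (snd q)"
    by (simp add: act_monom_def mult.assoc)
  also have "\<dots> = (even_image \<sigma> (fst p) * even_image \<sigma> (fst q))
      * (ordered_prod (ovar_image \<sigma>) (snd p) * ordered_prod (ovar_image \<sigma>) (snd q))"
    by (simp only: even_image_central[of _ "fst q"] mult.assoc)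
  also have "\<dots> = scalar (mono_coeff p q) * act_monom \<sigma> (mono_mult p q)"
    using anticommuting.ordered_prod_mult[OF anticommuting_ovar_image[OF assms(1)] assms(2,3)]
    by (simp add: act_monom_def mono_mult_def mono_coeff_def mono_sign_inversions
        scalar_minus_one_power minus_one_power_left_commute even_image_add mult.assoc)
  finally show ?thesis .
qed

definition act_fsp :: "(nat \<Rightarrow> nat) \<Rightarrow> fsp \<Rightarrow> fsp" where
  "act_fsp \<sigma> = lin_ext (act_monom \<sigma>)"

lemma Rep_fsp_act_fsp: "Rep_fsp (act_fsp \<sigma> a) = act \<sigma> (Rep_fsp a)"
  by (simp add: act_fsp_def lin_ext_def act_def Rep_fsp_sum Rep_fsp_scalar_mult sp_smult_def
      Rep_fsp_act_monom fun_eq_iff)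

lemma act_fsp_mult: "inj \<sigma> \<Longrightarrow> act_fsp \<sigma> (a * b) = act_fsp \<sigma> a * act_fsp \<sigma> b"
  unfolding act_fsp_def by (rule lin_ext_mult) (simp add: act_monom_mult)

lemma act_fsp_add: "act_fsp \<sigma> (a + b) = act_fsp \<sigma> a + act_fsp \<sigma> b"
  by (simp add: act_fsp_def lin_ext_add)

lemma act_fsp_zero: "act_fsp \<sigma> 0 = 0"
  by (simp add: act_fsp_def lin_ext_zero)

lemma act_fsp_uminus: "act_fsp \<sigma> (- a) = - act_fsp \<sigma> a"
  by (metis act_fsp_add act_fsp_zero add.right_inverse add_eq_0_iff)

lemma act_fsp_diff: "act_fsp \<sigma> (a - b) = act_fsp \<sigma> a - act_fsp \<sigma> b"
  by (simp only: diff_conv_add_uminus act_fsp_add act_fsp_uminus)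

lemma act_fsp_monom: "finite (snd p) \<Longrightarrow> act_fsp \<sigma> (monom p) = act_monom \<sigma> p"
  by (simp add: act_fsp_def lin_ext_monom)

lemma act_fsp_scalar: "act_fsp \<sigma> (scalar c) = scalar c"
proof -
  have "act_monom \<sigma> mono_one = 1"
    by (simp add: act_monom_def even_image_zero)
  then show ?thesis
    using lin_ext_scalar_monom[of mono_one "act_monom \<sigma>" c]
    by (simp add: act_fsp_def flip: one_monom)
qed

lemma act_fsp_one: "act_fsp \<sigma> 1 = 1"
  using act_fsp_scalar[of \<sigma> 1] by simp

lemma act_fsp_evar: "k < 3 \<Longrightarrow> act_fsp \<sigma> (evar k) = evar (\<sigma> k)"
  by (auto simp: evar_monom act_fsp_monom act_monom_def even_image_def less_Suc_eq numeral_3_eq_3)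

lemma act_fsp_ovar: "act_fsp \<sigma> (ovar j k) = ovar j (\<sigma> k)"
  by (simp add: ovar_monom act_fsp_monom act_monom_def even_image_zero ordered_prod_def ovar_image_def)

lemma act_fsp_prod_list: "inj \<sigma> \<Longrightarrow> act_fsp \<sigma> (prod_list xs) = prod_list (map (act_fsp \<sigma>) xs)"
  by (induction xs) (simp_all add: act_fsp_one act_fsp_mult)

lemma act_fsp_power: "inj \<sigma> \<Longrightarrow> act_fsp \<sigma> (x ^ n) = act_fsp \<sigma> x ^ n"
  by (induction n) (simp_all add: act_fsp_one act_fsp_mult)

section \<open>The elements \<open>z(d+1, I)\<close>\<close>

definition sum3 :: "(nat \<Rightarrow> 'a::monoid_add) \<Rightarrow> 'a" where
  "sum3 F = F 0 + F 1 + F 2"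

lemma sum3_permute:
  fixes F :: "nat \<Rightarrow> 'a::comm_monoid_add"
  assumes "\<sigma> permutes {0, 1, 2}"
  shows "sum3 (\<lambda>k. F (\<sigma> k)) = sum3 F"
  using sum.permute[OF assms, of F] by (simp add: sum3_def add.assoc)

lemma act_fsp_sum3_invariant:
  assumes "\<sigma> permutes {0, 1, 2}" "\<And>k. k < 3 \<Longrightarrow> act_fsp \<sigma> (F k) = F (\<sigma> k)"
  shows "act_fsp \<sigma> (sum3 F) = sum3 F"
  using sum3_permute[OF assms(1), of F] assms(2) by (simp add: sum3_def act_fsp_add)

definition ovar_prod :: "nat \<Rightarrow> nat set \<Rightarrow> fsp" where
  "ovar_prod k I = prod_list (map (\<lambda>i. ovar i k) (sorted_list_of_set I))"

definition zterm :: "nat \<Rightarrow> nat \<times> nat set \<Rightarrow> fsp" where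
  "zterm k u = evar k ^ fst u * ovar_prod k (snd u)"

definition zelem :: "nat \<times> nat set \<Rightarrow> fsp" where
  "zelem u = sum3 (\<lambda>k. zterm k u)"

definition power_sum :: "nat \<Rightarrow> fsp" where
  "power_sum n = sum3 (\<lambda>k. evar k ^ n)"

definition lin_rel :: "nat \<Rightarrow> fsp" where
  "lin_rel j = sum3 (ovar j)"

lemma Rep_fsp_sum3: "Rep_fsp (sum3 F) = sp_add (Rep_fsp (F 0)) (sp_add (Rep_fsp (F 1)) (Rep_fsp (F 2)))"
  by (simp add: sum3_def Rep_fsp_add sp_add_def add.assoc)

lemma Rep_fsp_zelem: "1 \<le> i \<Longrightarrow> Rep_fsp (zelem (i - 1, I)) = zgen i I"
  by (simp add: zelem_def zterm_def ovar_prod_def Rep_fsp_sum3 Rep_fsp_mult Rep_fsp_power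
      Rep_fsp_evar Rep_fsp_prod_list Rep_fsp_ovar o_def zgen_def oddI_def)

lemma Rep_fsp_power_sum: "Rep_fsp (power_sum n) = psum n"
  by (simp add: power_sum_def Rep_fsp_sum3 Rep_fsp_power Rep_fsp_evar psum_def)

lemma Rep_fsp_lin_rel: "Rep_fsp (lin_rel j) = linrel j"
  by (simp add: lin_rel_def Rep_fsp_sum3 Rep_fsp_ovar linrel_def)

lemma act_fsp_zterm: "inj \<sigma> \<Longrightarrow> k < 3 \<Longrightarrow> act_fsp \<sigma> (zterm k u) = zterm (\<sigma> k) u"
  by (simp add: zterm_def ovar_prod_def act_fsp_mult act_fsp_power act_fsp_evar act_fsp_prod_list
      act_fsp_ovar o_def)

lemma act_fsp_zelem: "\<sigma> permutes {0, 1, 2} \<Longrightarrow> act_fsp \<sigma> (zelem u) = zelem u"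
  unfolding zelem_def by (rule act_fsp_sum3_invariant) (simp_all add: act_fsp_zterm permutes_inj)

lemma act_fsp_power_sum: "\<sigma> permutes {0, 1, 2} \<Longrightarrow> act_fsp \<sigma> (power_sum n) = power_sum n"
  unfolding power_sum_def
  by (rule act_fsp_sum3_invariant) (simp_all add: act_fsp_power act_fsp_evar permutes_inj)

lemma act_fsp_lin_rel: "\<sigma> permutes {0, 1, 2} \<Longrightarrow> act_fsp \<sigma> (lin_rel j) = lin_rel j"
  unfolding lin_rel_def by (rule act_fsp_sum3_invariant) (simp_all add: act_fsp_ovar)

lemma ovar_prod_monom: "finite I \<Longrightarrow> ovar_prod k I = monom (\<lambda>_. 0, I \<times> {k})"
proof (induction I rule: finite_linorder_min_induct)
  case empty
  then show ?case by (simp add: ovar_prod_def one_monom mono_one_def)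
next
  case (insert a A)
  have "ovar_prod k (insert a A) = monom (\<lambda>_. 0, {(a, k)}) * monom (\<lambda>_. 0, A \<times> {k})"
    using insert sorted_list_of_set_insert_min[of A a] by (simp add: ovar_prod_def ovar_monom)
  moreover have "(a, k) \<notin> A \<times> {k}" "inversions {(a, k)} (A \<times> {k}) = {}"
    using insert by (auto simp: inversions_def)
  ultimately show ?case
    using insert by (simp add: monom_mult mono_coeff_def mono_mult_def mono_sign_inversions)
qed

definition exp_at :: "nat \<Rightarrow> nat \<Rightarrow> nat \<Rightarrow> nat" where
  "exp_at k d = (\<lambda>i. if i = k then d else 0)"

lemma zterm_monom: "finite I \<Longrightarrow> zterm k (d, I) = monom (exp_at k d, I \<times> {k})"
  by (simp add: zterm_def evar_power ovar_prod_monom monom_mult mono_coeff_def mono_mult_def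
      mono_sign_def exp_at_def)

definition idx_mult :: "nat \<times> nat set \<Rightarrow> nat \<times> nat set \<Rightarrow> nat \<times> nat set" where
  "idx_mult x y = (fst x + fst y, snd x \<union> snd y)"

lemma fst_idx_mult [simp]: "fst (idx_mult x y) = fst x + fst y"
  and snd_idx_mult [simp]: "snd (idx_mult x y) = snd x \<union> snd y"
  by (simp_all add: idx_mult_def)

definition odd_sign :: "nat set \<Rightarrow> nat set \<Rightarrow> rat" where
  "odd_sign I J = (if I \<inter> J = {} then (-1) ^ card (inversions I J) else 0)"

definition super_sign :: "nat \<times> nat set \<Rightarrow> nat \<times> nat set \<Rightarrow> rat" where
  "super_sign x y = (-1) ^ (card (snd x) * card (snd y))"

lemma card_inversions_times: "card (inversions (I \<times> {k}) (J \<times> {k})) = card (inversions I J)"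
proof -
  have "inversions (I \<times> {k}) (J \<times> {k}) = (\<lambda>(i, j). ((i, k), (j, k))) ` inversions I J"
    by (auto simp: inversions_def image_iff)
  moreover have "inj_on (\<lambda>(i, j). ((i, k), (j, k))) (inversions I J)" by (auto simp: inj_on_def)
  ultimately show ?thesis by (simp add: card_image)
qed

lemma zterm_mult:
  assumes "finite (snd x)" "finite (snd y)"
  shows "zterm k x * zterm k y = scalar (odd_sign (snd x) (snd y)) * zterm k (idx_mult x y)"
proof -
  obtain d I d' J where xy: "x = (d, I)" "y = (d', J)" by fastforce
  have "(I \<times> {k} \<inter> J \<times> {k} = {}) = (I \<inter> J = {})" by blast
  moreover have "mono_mult (exp_at k d, I \<times> {k}) (exp_at k d', J \<times> {k}) = (exp_at k (d + d'), (I \<union> J) \<times> {k})"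
    by (auto simp: mono_mult_def exp_at_def)
  ultimately show ?thesis
    using assms by (simp add: xy zterm_monom monom_mult mono_coeff_def mono_sign_inversions
        card_inversions_times idx_mult_def odd_sign_def)
qed

lemma zterm_commute:
  assumes "finite (snd x)" "finite (snd y)"
  shows "zterm k x * zterm l y = scalar (super_sign x y) * (zterm l y * zterm k x)"
proof -
  obtain d I d' J where xy: "x = (d, I)" "y = (d', J)" by fastforce
  show ?thesis
    using assms monom_commute[of "(exp_at k d, I \<times> {k})" "(exp_at l d', J \<times> {l})"]
    by (simp add: xy zterm_monom super_sign_def card_cartesian_product)
qed

section \<open>The ambient ring, the ideal and the subalgebra\<close>

lemma sum_closed:
  assumes "0 \<in> A" "\<And>a b. a \<in> A \<Longrightarrow> b \<in> A \<Longrightarrow> a + b \<in> A" "\<And>i. i \<in> I \<Longrightarrow> g i \<in> A"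
  shows "(\<Sum>i\<in>I. g i) \<in> A"
  using assms(3) by (induction I rule: infinite_finite_induct) (simp_all add: assms(1,2))

definition admissible :: "nat \<Rightarrow> mono \<Rightarrow> bool" where
  "admissible m p \<longleftrightarrow> (\<forall>k\<ge>3. fst p k = 0) \<and> snd p \<subseteq> {1..m} \<times> {0, 1, 2}"

definition ambient :: "nat \<Rightarrow> fsp set" where
  "ambient m = {a. \<forall>p\<in>sp_supp (Rep_fsp a). admissible m p}"

lemma Aring_subset_fsp_set: "Aring m \<subseteq> fsp_set"
proof
  fix f assume f: "f \<in> Aring m"
  have "finite (snd p)" if "p \<in> sp_supp f" for p
  proof -
    have "snd p \<subseteq> {1..m} \<times> {0, 1, 2}" using f that by (auto simp: Aring_def case_prod_beta)
    then show ?thesis by (rule finite_subset) simp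
  qed
  then show "f \<in> fsp_set" using f by (simp add: Aring_def fsp_set_def)
qed

lemma ambient_iff: "a \<in> ambient m \<longleftrightarrow> Rep_fsp a \<in> Aring m"
  using finite_sp_supp_Rep_fsp[of a]
  by (simp add: ambient_def Aring_def admissible_def case_prod_beta)

lemma ambient_add: "a \<in> ambient m \<Longrightarrow> b \<in> ambient m \<Longrightarrow> a + b \<in> ambient m"
  using sp_supp_add[of "Rep_fsp a" "Rep_fsp b"] by (auto simp: ambient_def Rep_fsp_add)

lemma ambient_mult:
  assumes "a \<in> ambient m" "b \<in> ambient m"
  shows "a * b \<in> ambient m"
  unfolding ambient_def mem_Collect_eq
proof
  fix r assume "r \<in> sp_supp (Rep_fsp (a * b))"
  then obtain p q where "p \<in> sp_supp (Rep_fsp a)" "q \<in> sp_supp (Rep_fsp b)" "r = mono_mult p q"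
    using sp_supp_mult[of "Rep_fsp a" "Rep_fsp b"] by (auto simp: Rep_fsp_mult)
  then show "admissible m r" using assms by (auto simp: ambient_def admissible_def mono_mult_def)
qed

lemma ambient_scalar: "scalar c \<in> ambient m"
  by (auto simp: ambient_def Rep_fsp_scalar sp_supp_def sp_smult_def sp_one_def sp_basis_def
      admissible_def)

lemma ambient_prod_list: "(\<And>x. x \<in> set xs \<Longrightarrow> x \<in> ambient m) \<Longrightarrow> prod_list xs \<in> ambient m"
  by (induction xs) (simp_all add: ambient_mult ambient_scalar[of 1, simplified])

lemma ambient_monom: "finite (snd p) \<Longrightarrow> admissible m p \<Longrightarrow> monom p \<in> ambient m"
  by (simp add: ambient_def Rep_fsp_monom sp_supp_basis)

lemma ambient_act_monom:
  assumes "\<sigma> permutes {0, 1, 2}" "admissible m p" "finite (snd p)"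
  shows "act_monom \<sigma> p \<in> ambient m"
proof -
  have perm: "\<sigma> k \<in> {0, 1, 2} \<longleftrightarrow> k \<in> {0, 1, 2}" for k
    using permutes_in_image[OF assms(1)] .
  have "admissible m (permute_exps \<sigma> (fst p), {})"
    using perm[of 0] perm[of 1] perm[of 2] by (auto simp: admissible_def permute_exps_def)
  then have "even_image \<sigma> (fst p) \<in> ambient m"
    by (simp add: even_image_monom ambient_monom)
  moreover have "x \<in> ambient m" if x: "x \<in> set (map (ovar_image \<sigma>) (sorted_list_of_set (snd p)))" for x
  proof -
    obtain j k where jk: "(j, k) \<in> snd p" "x = ovar j (\<sigma> k)"
      using x assms(3) by (auto simp: ovar_image_def)
    then have "admissible m (\<lambda>_. 0, {(j, \<sigma> k)})"
      using assms(2) perm[of k] by (auto simp: admissible_def)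
    then show ?thesis by (simp add: jk ovar_monom ambient_monom)
  qed
  then have "ordered_prod (ovar_image \<sigma>) (snd p) \<in> ambient m"
    unfolding ordered_prod_def by (rule ambient_prod_list)
  ultimately show ?thesis by (simp add: act_monom_def ambient_mult)
qed

lemma ambient_act_fsp:
  assumes "\<sigma> permutes {0, 1, 2}" "a \<in> ambient m"
  shows "act_fsp \<sigma> a \<in> ambient m"
  unfolding act_fsp_def lin_ext_def
  by (intro sum_closed ambient_add ambient_mult ambient_scalar ambient_act_monom[OF assms(1)]
      ambient_scalar[of 0, simplified])
     (use assms(2) in \<open>auto simp: ambient_def finite_odd_part_Rep_fsp\<close>)

definition J_fsp :: "nat \<Rightarrow> fsp set" where
  "J_fsp m = {a. Rep_fsp a \<in> Jideal m}"

lemma Jideal_subset_fsp_set: "f \<in> Jideal m \<Longrightarrow> f \<in> fsp_set"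
proof (induction rule: Jideal.induct)
  case (gen_lin j)
  then show ?case using Rep_fsp[of "lin_rel j"] by (simp add: Rep_fsp_lin_rel)
next
  case (mult_left h f)
  then show ?case using Aring_subset_fsp_set by (auto intro: fsp_set_mult)
next
  case (mult_right h f)
  then show ?case using Aring_subset_fsp_set by (auto intro: fsp_set_mult)
qed (use Rep_fsp[of "power_sum _"] in \<open>auto simp: Rep_fsp_power_sum fsp_set_zero fsp_set_add\<close>)

lemma J_fsp_add: "a \<in> J_fsp m \<Longrightarrow> b \<in> J_fsp m \<Longrightarrow> a + b \<in> J_fsp m"
  by (simp add: J_fsp_def Rep_fsp_add Jideal.add)

lemma J_fsp_mult_left: "h \<in> ambient m \<Longrightarrow> a \<in> J_fsp m \<Longrightarrow> h * a \<in> J_fsp m"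
  by (simp add: J_fsp_def Rep_fsp_mult Jideal.mult_left ambient_iff)

lemma J_fsp_mult_right: "h \<in> ambient m \<Longrightarrow> a \<in> J_fsp m \<Longrightarrow> a * h \<in> J_fsp m"
  by (simp add: J_fsp_def Rep_fsp_mult Jideal.mult_right ambient_iff)

lemma J_fsp_zero: "0 \<in> J_fsp m"
  by (simp add: J_fsp_def Rep_fsp_zero Jideal.zero)

lemma J_fsp_scalar_mult: "a \<in> J_fsp m \<Longrightarrow> scalar c * a \<in> J_fsp m"
  by (simp add: J_fsp_mult_left ambient_scalar)

lemma J_fsp_diff:
  assumes "a \<in> J_fsp m" "b \<in> J_fsp m"
  shows "a - b \<in> J_fsp m"
proof -
  have "- b \<in> J_fsp m" using J_fsp_scalar_mult[OF assms(2), of "-1"] by (simp add: scalar_uminus)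
  then show ?thesis using J_fsp_add[OF assms(1)] by (metis diff_conv_add_uminus)
qed

lemma Abs_fsp_add: "f \<in> fsp_set \<Longrightarrow> g \<in> fsp_set \<Longrightarrow> Abs_fsp (sp_add f g) = Abs_fsp f + Abs_fsp g"
  by (metis Abs_fsp_inverse Rep_fsp_add Rep_fsp_inverse)

lemma Abs_fsp_mult: "f \<in> fsp_set \<Longrightarrow> g \<in> fsp_set \<Longrightarrow> Abs_fsp (sp_mult f g) = Abs_fsp f * Abs_fsp g"
  by (metis Abs_fsp_inverse Rep_fsp_mult Rep_fsp_inverse)

lemma act_fsp_J_fsp:
  assumes \<sigma>: "\<sigma> permutes {0, 1, 2}" and f: "f \<in> Jideal m"
  shows "act_fsp \<sigma> (Abs_fsp f) \<in> J_fsp m"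
proof -
  have fixed: "act_fsp \<sigma> (Abs_fsp (Rep_fsp b)) \<in> J_fsp m"
    if "act_fsp \<sigma> b = b" "Rep_fsp b \<in> Jideal m" for b
    using that by (simp add: J_fsp_def Rep_fsp_inverse)
  have ambient: "h \<in> fsp_set" "act_fsp \<sigma> (Abs_fsp h) \<in> ambient m" if h: "h \<in> Aring m" for h
  proof -
    show "h \<in> fsp_set" using h Aring_subset_fsp_set by blast
    then show "act_fsp \<sigma> (Abs_fsp h) \<in> ambient m"
      using h by (intro ambient_act_fsp[OF \<sigma>]) (simp add: ambient_iff Abs_fsp_inverse)
  qed
  from f show ?thesis
  proof (induction rule: Jideal.induct)
    case gen_p1
    show ?case using fixed[OF act_fsp_power_sum[OF \<sigma>]] Jideal.gen_p1 by (simp add: Rep_fsp_power_sum)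
  next
    case gen_p2
    show ?case using fixed[OF act_fsp_power_sum[OF \<sigma>]] Jideal.gen_p2 by (simp add: Rep_fsp_power_sum)
  next
    case gen_p6
    show ?case using fixed[OF act_fsp_power_sum[OF \<sigma>]] Jideal.gen_p6 by (simp add: Rep_fsp_power_sum)
  next
    case (gen_lin j)
    then show ?case using fixed[OF act_fsp_lin_rel[OF \<sigma>]] Jideal.gen_lin by (simp add: Rep_fsp_lin_rel)
  next
    case zero
    show ?case using fixed[OF act_fsp_zero] Jideal.zero by (simp add: Rep_fsp_zero)
  next
    case (add f g)
    then show ?case by (simp add: Abs_fsp_add Jideal_subset_fsp_set act_fsp_add J_fsp_add)
  next
    case (mult_left h f)
    then show ?case
      by (simp add: ambient Abs_fsp_mult Jideal_subset_fsp_set act_fsp_mult permutes_inj[OF \<sigma>]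
          J_fsp_mult_left)
  next
    case (mult_right h f)
    then show ?case
      by (simp add: ambient Abs_fsp_mult Jideal_subset_fsp_set act_fsp_mult permutes_inj[OF \<sigma>]
          J_fsp_mult_right)
  qed
qed

definition Z_fsp :: "nat \<Rightarrow> fsp set" where
  "Z_fsp m = {a. Rep_fsp a \<in> subalg (Zgens m)}"

lemma Zgens_subset_fsp_set: "Zgens m \<subseteq> fsp_set"
  unfolding Zgens_def by (auto simp flip: Rep_fsp_zelem intro: Rep_fsp)

lemma subalg_subset_fsp_set: "G \<subseteq> fsp_set \<Longrightarrow> subalg G \<subseteq> fsp_set"
proof
  show "f \<in> fsp_set" if "G \<subseteq> fsp_set" "f \<in> subalg G" for f
    using that(2,1)
    by (induction rule: subalg.induct) (auto intro: fsp_set_smult fsp_set_one fsp_set_add fsp_set_mult)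
qed

lemma Z_fsp_scalar: "scalar c \<in> Z_fsp m"
  by (simp add: Z_fsp_def Rep_fsp_scalar subalg.const)

lemma Z_fsp_add: "a \<in> Z_fsp m \<Longrightarrow> b \<in> Z_fsp m \<Longrightarrow> a + b \<in> Z_fsp m"
  by (simp add: Z_fsp_def Rep_fsp_add subalg.add)

lemma Z_fsp_mult: "a \<in> Z_fsp m \<Longrightarrow> b \<in> Z_fsp m \<Longrightarrow> a * b \<in> Z_fsp m"
  by (simp add: Z_fsp_def Rep_fsp_mult subalg.mult)

lemma Z_fsp_scalar_mult: "a \<in> Z_fsp m \<Longrightarrow> scalar c * a \<in> Z_fsp m"
  by (simp add: Z_fsp_mult Z_fsp_scalar)

lemma Z_fsp_diff:
  assumes "a \<in> Z_fsp m" "b \<in> Z_fsp m"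
  shows "a - b \<in> Z_fsp m"
proof -
  have "- b \<in> Z_fsp m" using Z_fsp_scalar_mult[OF assms(2), of "-1"] by (simp add: scalar_uminus)
  then show ?thesis using Z_fsp_add[OF assms(1)] by (metis diff_conv_add_uminus)
qed

lemma Z_fsp_sum: "(\<And>i. i \<in> I \<Longrightarrow> g i \<in> Z_fsp m) \<Longrightarrow> (\<Sum>i\<in>I. g i) \<in> Z_fsp m"
  by (rule sum_closed) (auto simp: Z_fsp_add Z_fsp_scalar[of 0, simplified])

lemma zelem_generator:
  assumes "d \<le> 5" "card I \<le> 3" "I \<subseteq> {1..m}"
  shows "zelem (d, I) \<in> Z_fsp m"
proof -
  have "zgen (d + 1) I \<in> Zgens m"
    using assms unfolding Zgens_def by (intro CollectI exI[of _ "d + 1"] exI[of _ I]) auto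
  then show ?thesis using Rep_fsp_zelem[of "d + 1" I] by (simp add: Z_fsp_def subalg.gen)
qed

lemma act_fsp_subalg:
  assumes \<sigma>: "\<sigma> permutes {0, 1, 2}"
  shows "f \<in> subalg (Zgens m) \<Longrightarrow> act_fsp \<sigma> (Abs_fsp f) = Abs_fsp f"
proof (induction rule: subalg.induct)
  case (const c)
  then show ?case using act_fsp_scalar[of \<sigma> c] by (simp add: scalar_def)
next
  case (gen g)
  then obtain i I where "g = zgen i I" "1 \<le> i" by (auto simp: Zgens_def)
  then have "Abs_fsp g = zelem (i - 1, I)" using Rep_fsp_zelem Rep_fsp_inverse by metis
  then show ?case using act_fsp_zelem[OF \<sigma>] by simp
next
  case (add f g)
  moreover have "f \<in> fsp_set" "g \<in> fsp_set"
    using add.hyps subalg_subset_fsp_set[OF Zgens_subset_fsp_set] by blast+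
  ultimately show ?case by (simp add: Abs_fsp_add act_fsp_add)
next
  case (mult f g)
  moreover have "f \<in> fsp_set" "g \<in> fsp_set"
    using mult.hyps subalg_subset_fsp_set[OF Zgens_subset_fsp_set] by blast+
  ultimately show ?case by (simp add: Abs_fsp_mult act_fsp_mult permutes_inj[OF \<sigma>])
qed

lemma invariant_class_if_subalg:
  assumes f: "f \<in> Aring m" and g: "g \<in> subalg (Zgens m)" and fg: "sp_sub f g \<in> Jideal m"
  shows "invariant_class m f"
  unfolding invariant_class_def
proof (intro allI impI)
  fix \<sigma> :: "nat \<Rightarrow> nat" assume \<sigma>: "\<sigma> permutes {0, 1, 2}"
  define a b where "a = Abs_fsp f" and "b = Abs_fsp g"
  have "f \<in> fsp_set" "g \<in> fsp_set"
    using f g Aring_subset_fsp_set subalg_subset_fsp_set[OF Zgens_subset_fsp_set] by blast+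
  then have ra: "Rep_fsp a = f" and rb: "Rep_fsp b = g" by (simp_all add: a_def b_def Abs_fsp_inverse)
  have ab: "a - b \<in> J_fsp m" using fg by (simp add: J_fsp_def Rep_fsp_diff ra rb)
  then have "act_fsp \<sigma> (a - b) \<in> J_fsp m"
    using act_fsp_J_fsp[OF \<sigma>, of "Rep_fsp (a - b)" m] by (simp add: J_fsp_def Rep_fsp_inverse)
  then have "act_fsp \<sigma> (a - b) - (a - b) \<in> J_fsp m"
    using ab by (rule J_fsp_diff)
  moreover have "act_fsp \<sigma> b = b" using act_fsp_subalg[OF \<sigma> g] by (simp add: b_def)
  moreover have "act_fsp \<sigma> (a - b) - (a - b) = act_fsp \<sigma> a - a"
    using \<open>act_fsp \<sigma> b = b\<close> by (simp add: act_fsp_diff)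
  ultimately have "act_fsp \<sigma> a - a \<in> J_fsp m" by simp
  then show "sp_sub (act \<sigma> f) f \<in> Jideal m"
    by (simp add: J_fsp_def Rep_fsp_diff Rep_fsp_act_fsp ra)
qed

section \<open>Polarization identities for three indices\<close>

definition distinct_sum3 :: "(nat \<Rightarrow> 'a::ring_1) \<Rightarrow> (nat \<Rightarrow> 'a) \<Rightarrow> (nat \<Rightarrow> 'a) \<Rightarrow> 'a" where
  "distinct_sum3 F G H = F 0 * G 1 * H 2 + F 0 * G 2 * H 1 + F 1 * G 0 * H 2
     + F 1 * G 2 * H 0 + F 2 * G 0 * H 1 + F 2 * G 1 * H 0"

definition incl_excl3 :: "(nat \<Rightarrow> 'a::ring_1) \<Rightarrow> (nat \<Rightarrow> 'a) \<Rightarrow> (nat \<Rightarrow> 'a) \<Rightarrow> 'a" where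
  "incl_excl3 F G H = sum3 F * sum3 G * sum3 H - sum3 (\<lambda>k. F k * G k) * sum3 H
     - sum3 (\<lambda>k. sum3 (\<lambda>l. F k * G l * H k)) - sum3 F * sum3 (\<lambda>k. G k * H k)"

lemma distinct_sum3_incl_excl:
  "distinct_sum3 F G H = incl_excl3 F G H + 2 * sum3 (\<lambda>k. F k * G k * H k)"
  by (simp add: distinct_sum3_def incl_excl3_def sum3_def algebra_simps mult_2)

lemma incl_excl3_commute:
  assumes "\<And>k l. G l * H k = e * (H k * G l)" "\<And>x. e * x = x * e"
  shows "incl_excl3 F G H = sum3 F * sum3 G * sum3 H - sum3 (\<lambda>k. F k * G k) * sum3 H
     - e * (sum3 (\<lambda>k. F k * H k) * sum3 G) - sum3 F * sum3 (\<lambda>k. G k * H k)"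
proof -
  have "F k * G l * H k = e * (F k * H k * G l)" for k l
    by (metis assms mult.assoc)
  then show ?thesis by (simp add: incl_excl3_def sum3_def algebra_simps)
qed

text \<open>With only three indices, a fourth index always repeats one of three distinct ones.\<close>

lemma distinct_sum3_mult_sum3:
  assumes GS: "\<And>k l. G l * S k = e1 * (S k * G l)" and HS: "\<And>k l. H l * S k = e2 * (S k * H l)"
    and central: "\<And>x. e1 * x = x * e1" "\<And>x. e2 * x = x * e2"
  shows "distinct_sum3 F G H * sum3 S = distinct_sum3 F G (\<lambda>k. H k * S k)
    + e2 * distinct_sum3 F (\<lambda>k. G k * S k) H + e1 * e2 * distinct_sum3 (\<lambda>k. F k * S k) G H"
proof -
  have t0: "F k * G l * H n * S n = F k * G l * (H n * S n)" for k l n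
    by (simp add: mult.assoc)
  have t1: "F k * G l * H n * S l = e2 * (F k * (G l * S l) * H n)" for k l n
    by (metis HS central(2) mult.assoc)
  have t2: "F k * G l * H n * S k = e1 * e2 * (F k * S k * G l * H n)" for k l n
  proof -
    have "F k * G l * H n * S k = e2 * (F k * (G l * S k) * H n)"
      by (metis HS central(2) mult.assoc)
    also have "\<dots> = e1 * e2 * (F k * S k * G l * H n)"
      by (metis GS central mult.assoc)
    finally show ?thesis .
  qed
  show ?thesis
    unfolding distinct_sum3_def sum3_def
    by (simp only: distrib_left distrib_right t0 t1 t2) (simp only: add_ac)
qed

lemma mult_6_eq_sum: "(6::'a::ring_1) * d = d + d + d + d + d + d"
proof -
  have "(6::'a) = 1 + 1 + 1 + 1 + 1 + 1" by simp
  then show ?thesis by (simp only: distrib_right mult_1_left)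
qed

lemma distinct_sum3_mult_sum3_incl_excl:
  assumes GS: "\<And>k l. G l * S k = e1 * (S k * G l)" and HS: "\<And>k l. H l * S k = e2 * (S k * H l)"
    and central: "\<And>x. e1 * x = x * e1" "\<And>x. e2 * x = x * e2"
    and square: "e1 * e1 = 1" "e2 * e2 = 1"
  shows "distinct_sum3 F G H * sum3 S = incl_excl3 F G (\<lambda>k. H k * S k)
    + e2 * incl_excl3 F (\<lambda>k. G k * S k) H + e1 * e2 * incl_excl3 (\<lambda>k. F k * S k) G H
    + 6 * sum3 (\<lambda>k. F k * G k * H k * S k)"
proof -
  define \<Delta> where "\<Delta> = sum3 (\<lambda>k. F k * G k * H k * S k)"
  have SH: "S k * H k = e2 * (H k * S k)" for k
    by (metis HS square(2) central(2) mult.assoc mult_1_left)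
  have SG: "S k * G k = e1 * (G k * S k)" for k
    by (metis GS square(1) central(1) mult.assoc mult_1_left)
  have d1: "sum3 (\<lambda>k. F k * G k * (H k * S k)) = \<Delta>"
    by (simp add: \<Delta>_def mult.assoc)
  have d2: "sum3 (\<lambda>k. F k * (G k * S k) * H k) = e2 * \<Delta>"
  proof -
    have "F k * (G k * S k) * H k = e2 * (F k * G k * H k * S k)" for k
      by (metis SH central(2) mult.assoc)
    then show ?thesis by (simp add: \<Delta>_def sum3_def distrib_left)
  qed
  have d3: "sum3 (\<lambda>k. F k * S k * G k * H k) = e1 * e2 * \<Delta>"
  proof -
    have "F k * S k * G k * H k = e1 * e2 * (F k * G k * H k * S k)" for k
      by (metis SG SH central mult.assoc)
    then show ?thesis by (simp add: \<Delta>_def sum3_def distrib_left)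
  qed
  have sq: "e2 * (e2 * \<Delta>) = \<Delta>" "e1 * e2 * (e1 * e2 * \<Delta>) = \<Delta>"
    by (metis square central mult.assoc mult_1_left)+
  have "distinct_sum3 F G H * sum3 S = distinct_sum3 F G (\<lambda>k. H k * S k)
      + e2 * distinct_sum3 F (\<lambda>k. G k * S k) H + e1 * e2 * distinct_sum3 (\<lambda>k. F k * S k) G H"
    by (rule distinct_sum3_mult_sum3[OF GS HS central])
  also have "\<dots> = incl_excl3 F G (\<lambda>k. H k * S k) + 2 * \<Delta>
      + e2 * (incl_excl3 F (\<lambda>k. G k * S k) H + 2 * (e2 * \<Delta>))
      + e1 * e2 * (incl_excl3 (\<lambda>k. F k * S k) G H + 2 * (e1 * e2 * \<Delta>))"
    by (simp only: distinct_sum3_incl_excl d1 d2 d3)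
  also have "\<dots> = incl_excl3 F G (\<lambda>k. H k * S k) + e2 * incl_excl3 F (\<lambda>k. G k * S k) H
      + e1 * e2 * incl_excl3 (\<lambda>k. F k * S k) G H + 6 * \<Delta>"
    by (simp only: mult_2 distrib_left sq mult_6_eq_sum add_ac)
  finally show ?thesis unfolding \<Delta>_def .
qed

section \<open>All \<open>z(d+1, I)\<close> lie in the subalgebra generated by the small ones\<close>

definition zfam :: "rat \<Rightarrow> nat \<times> nat set \<Rightarrow> nat \<Rightarrow> fsp" where
  "zfam c x = (\<lambda>k. scalar c * zterm k x)"

lemma sum3_zfam: "sum3 (zfam c x) = scalar c * zelem x"
  by (simp add: sum3_def zfam_def zelem_def distrib_left)

lemma zfam_mult_at:
  assumes "finite (snd x)" "finite (snd y)"
  shows "zfam c x k * zfam c' y k = zfam (c * c' * odd_sign (snd x) (snd y)) (idx_mult x y) k"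
proof -
  have "zfam c x k * zfam c' y k = scalar (c * c') * (zterm k x * zterm k y)"
    by (simp only: zfam_def scalar_mult_scalar)
  also have "\<dots> = scalar (c * c') * (scalar (odd_sign (snd x) (snd y)) * zterm k (idx_mult x y))"
    by (simp only: zterm_mult assms)
  finally show ?thesis by (simp only: zfam_def mult.assoc[symmetric] scalar_mult[symmetric])
qed

lemma zfam_mult:
  assumes "finite (snd x)" "finite (snd y)"
  shows "(\<lambda>k. zfam c x k * zfam c' y k) = zfam (c * c' * odd_sign (snd x) (snd y)) (idx_mult x y)"
  using zfam_mult_at[OF assms] by (simp add: fun_eq_iff)

lemma zfam_commute:
  assumes "finite (snd x)" "finite (snd y)"
  shows "zfam c x l * zfam c' y k = scalar (super_sign x y) * (zfam c' y k * zfam c x l)"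
proof -
  have "zfam c x l * zfam c' y k = scalar (c * c') * (zterm l x * zterm k y)"
    by (simp only: zfam_def scalar_mult_scalar)
  also have "\<dots> = scalar (c * c') * (scalar (super_sign x y) * (zterm k y * zterm l x))"
    by (simp only: zterm_commute[OF assms, of l k])
  also have "\<dots> = scalar (super_sign x y) * (scalar (c' * c) * (zterm k y * zterm l x))"
    by (simp only: scalar_left_commute[of "scalar (c * c')"]) (simp only: mult.commute[of c c'])
  finally show ?thesis by (simp only: zfam_def scalar_mult_scalar)
qed

lemma scalar_super_sign_square: "scalar (super_sign x y) * scalar (super_sign x y) = 1"
  by (simp add: super_sign_def flip: scalar_mult power_mult_distrib)

lemma incl_excl3_zfam_in_Z_fsp:
  assumes fin: "finite (snd x)" "finite (snd y)" "finite (snd z)"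
    and Z: "zelem x \<in> Z_fsp m" "zelem y \<in> Z_fsp m" "zelem z \<in> Z_fsp m"
      "zelem (idx_mult x y) \<in> Z_fsp m" "zelem (idx_mult x z) \<in> Z_fsp m" "zelem (idx_mult y z) \<in> Z_fsp m"
  shows "incl_excl3 (zfam c x) (zfam c' y) (zfam c'' z) \<in> Z_fsp m"
  unfolding incl_excl3_commute[OF zfam_commute[OF fin(2,3)] scalar_commute]
    zfam_mult[OF fin(1,2)] zfam_mult[OF fin(1,3)] zfam_mult[OF fin(2,3)] sum3_zfam
  by (intro Z_fsp_diff Z_fsp_mult Z_fsp_scalar_mult Z Z_fsp_scalar)

lemma distinct_sum3_zfam_in_Z_fsp:
  assumes fin: "finite (snd x)" "finite (snd y)" "finite (snd z)"
    and Z: "zelem x \<in> Z_fsp m" "zelem y \<in> Z_fsp m" "zelem z \<in> Z_fsp m"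
      "zelem (idx_mult x y) \<in> Z_fsp m" "zelem (idx_mult x z) \<in> Z_fsp m" "zelem (idx_mult y z) \<in> Z_fsp m"
      "zelem (idx_mult (idx_mult x y) z) \<in> Z_fsp m"
  shows "distinct_sum3 (zfam c x) (zfam c' y) (zfam c'' z) \<in> Z_fsp m"
proof -
  have "finite (snd (idx_mult x y))" using fin by simp
  then have "(\<lambda>k. zfam c x k * zfam c' y k * zfam c'' z k)
      = zfam (c * c' * odd_sign (snd x) (snd y) * c'' * odd_sign (snd (idx_mult x y)) (snd z))
          (idx_mult (idx_mult x y) z)"
    using fin by (simp add: zfam_mult_at)
  then show ?thesis
    unfolding distinct_sum3_incl_excl
    using incl_excl3_zfam_in_Z_fsp[OF fin Z(1-6)]
    by (simp add: sum3_zfam mult_2 Z_fsp_add Z_fsp_scalar_mult Z(7))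
qed

definition weight :: "nat \<times> nat set \<Rightarrow> nat" where
  "weight x = fst x + card (snd x)"

lemma weight_idx_mult:
  "finite (snd x) \<Longrightarrow> finite (snd y) \<Longrightarrow> snd x \<inter> snd y = {} \<Longrightarrow> weight (idx_mult x y) = weight x + weight y"
  by (simp add: weight_def card_Un_disjoint)

lemma zfam_prod4:
  assumes fin: "finite (snd a)" "finite (snd b)" "finite (snd c)" "finite (snd s)"
    and disj: "snd a \<inter> snd b = {}" "snd a \<inter> snd c = {}" "snd a \<inter> snd s = {}"
      "snd b \<inter> snd c = {}" "snd b \<inter> snd s = {}" "snd c \<inter> snd s = {}"
  obtains g where "g \<noteq> 0"
    "(\<lambda>k. zfam 1 a k * zfam 1 b k * zfam 1 c k * zfam 1 s k)
      = zfam g (idx_mult (idx_mult (idx_mult a b) c) s)"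
proof
  show "odd_sign (snd a) (snd b) * odd_sign (snd a \<union> snd b) (snd c)
      * odd_sign (snd a \<union> snd b \<union> snd c) (snd s) \<noteq> 0"
    using disj by (simp add: odd_sign_def Int_Un_distrib2)
qed (simp add: zfam_mult_at fin)

text \<open>The polarized form of the vanishing of the fourth elementary symmetric function of three
  variables.\<close>

lemma zelem_in_Z_fsp_split4:
  fixes a b c s :: "nat \<times> nat set"
  defines "u \<equiv> idx_mult (idx_mult (idx_mult a b) c) s"
  assumes fin: "finite (snd a)" "finite (snd b)" "finite (snd c)" "finite (snd s)"
    and disj: "snd a \<inter> snd b = {}" "snd a \<inter> snd c = {}" "snd a \<inter> snd s = {}"
      "snd b \<inter> snd c = {}" "snd b \<inter> snd s = {}" "snd c \<inter> snd s = {}"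
    and pos: "weight a \<ge> 1" "weight b \<ge> 1" "weight c \<ge> 1" "weight s \<ge> 1"
    and IH: "\<And>x. weight x < weight u \<Longrightarrow> snd x \<subseteq> snd u \<Longrightarrow> zelem x \<in> Z_fsp m"
  shows "zelem u \<in> Z_fsp m"
proof -
  let ?m = idx_mult
  note w = weight_idx_mult fin disj Int_Un_distrib Int_Un_distrib2 Int_commute
  have Z: "zelem x \<in> Z_fsp m"
    if "x \<in> {a, b, c, s, ?m a b, ?m a c, ?m b c, ?m (?m a b) c, ?m c s, ?m a (?m c s), ?m b (?m c s),
      ?m b s, ?m a (?m b s), ?m (?m b s) c, ?m a s, ?m (?m a s) b, ?m (?m a s) c}" for x
    using that pos by (intro IH) (auto simp: u_def w)
  define F G H S where "F = zfam 1 a" and "G = zfam 1 b" and "H = zfam 1 c" and "S = zfam 1 s"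
  define e1 e2 where "e1 = scalar (super_sign b s)" and "e2 = scalar (super_sign c s)"
  have expand: "distinct_sum3 F G H * sum3 S = incl_excl3 F G (\<lambda>k. H k * S k)
      + e2 * incl_excl3 F (\<lambda>k. G k * S k) H + e1 * e2 * incl_excl3 (\<lambda>k. F k * S k) G H
      + 6 * sum3 (\<lambda>k. F k * G k * H k * S k)"
    unfolding F_def G_def H_def S_def e1_def e2_def
    by (intro distinct_sum3_mult_sum3_incl_excl zfam_commute scalar_commute
        scalar_super_sign_square fin)
  have "distinct_sum3 F G H \<in> Z_fsp m"
    unfolding F_def G_def H_def by (rule distinct_sum3_zfam_in_Z_fsp) (use fin Z in auto)
  moreover have "sum3 S \<in> Z_fsp m"
    unfolding S_def sum3_zfam by (intro Z_fsp_scalar_mult Z) simp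
  moreover have "incl_excl3 F G (\<lambda>k. H k * S k) \<in> Z_fsp m"
    unfolding F_def G_def H_def S_def zfam_mult[OF fin(3,4)]
    by (rule incl_excl3_zfam_in_Z_fsp) (use fin Z in auto)
  moreover have "incl_excl3 F (\<lambda>k. G k * S k) H \<in> Z_fsp m"
    unfolding F_def G_def H_def S_def zfam_mult[OF fin(2,4)]
    by (rule incl_excl3_zfam_in_Z_fsp) (use fin Z in auto)
  moreover have "incl_excl3 (\<lambda>k. F k * S k) G H \<in> Z_fsp m"
    unfolding F_def G_def H_def S_def zfam_mult[OF fin(1,4)]
    by (rule incl_excl3_zfam_in_Z_fsp) (use fin Z in auto)
  moreover have "e1 \<in> Z_fsp m" "e2 \<in> Z_fsp m" by (simp_all add: e1_def e2_def Z_fsp_scalar)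
  ultimately have "distinct_sum3 F G H * sum3 S - incl_excl3 F G (\<lambda>k. H k * S k)
      - e2 * incl_excl3 F (\<lambda>k. G k * S k) H - e1 * e2 * incl_excl3 (\<lambda>k. F k * S k) G H \<in> Z_fsp m"
    by (intro Z_fsp_diff Z_fsp_mult)
  then have "6 * sum3 (\<lambda>k. F k * G k * H k * S k) \<in> Z_fsp m"
    unfolding expand by (simp add: algebra_simps)
  moreover obtain g where "g \<noteq> 0" "(\<lambda>k. F k * G k * H k * S k) = zfam g u"
    using zfam_prod4[OF fin disj] unfolding F_def G_def H_def S_def u_def .
  ultimately have "scalar (6 * g) * zelem u \<in> Z_fsp m" "6 * g \<noteq> 0"
    by (simp_all add: sum3_zfam scalar_mult mult.assoc flip: scalar_numeral)
  then show ?thesis by (metis Z_fsp_scalar_mult scalar_inverse_cancel)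
qed

lemma zelem_in_Z_fsp: "snd u \<subseteq> {1..m} \<Longrightarrow> zelem u \<in> Z_fsp m"
proof (induction "weight u" arbitrary: u rule: less_induct)
  case less
  obtain d I where u: "u = (d, I)" by fastforce
  have I: "I \<subseteq> {1..m}" "finite I" using less.prems u by (auto intro: finite_subset)
  have IH: "zelem x \<in> Z_fsp m" if "weight x < weight u" "snd x \<subseteq> snd u" for x
    using less that by blast
  consider "d \<le> 5 \<and> card I \<le> 3" | "card I \<ge> 4" | "d \<ge> 6" by linarith
  then show ?case
  proof cases
    case 1
    then show ?thesis using zelem_generator I u by simp
  next
    case 2
    obtain T where T: "T \<subseteq> I" "card T = 3"
      using obtain_subset_with_card_n[of 3 I] 2 by auto
    then obtain i1 i2 i3 where T_eq: "T = {i1, i2, i3}" "i1 \<noteq> i2" "i2 \<noteq> i3" "i1 \<noteq> i3"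
      by (auto simp: card_3_iff)
    have "card (I - T) \<ge> 1" using 2 T I(2) by (simp add: card_Diff_subset finite_subset)
    moreover have "idx_mult (idx_mult (idx_mult (0, {i1}) (0, {i2})) (0, {i3})) (d, I - T) = u"
      using T T_eq by (auto simp: u idx_mult_def)
    ultimately show ?thesis
      using zelem_in_Z_fsp_split4[of "(0, {i1})" "(0, {i2})" "(0, {i3})" "(d, I - T)" m] IH I(2) T_eq
      by (simp add: weight_def)
  next
    case 3
    have "idx_mult (idx_mult (idx_mult (1, {}) (1, {})) (1, {})) (d - 3, I) = u"
      using 3 by (simp add: u idx_mult_def)
    then show ?thesis
      using zelem_in_Z_fsp_split4[of "(1, {})" "(1, {})" "(1, {})" "(d - 3, I)" m] IH I(2) 3
      by (simp add: weight_def)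
  qed
qed

section \<open>Averaging over \<open>\<SS>\<^sub>3\<close>\<close>

lemma sum_permutes3:
  fixes f :: "nat \<Rightarrow> nat \<Rightarrow> nat \<Rightarrow> 'a::comm_monoid_add"
  shows "(\<Sum>\<sigma>\<in>{\<sigma>. \<sigma> permutes {0, 1, 2}}. f (\<sigma> 0) (\<sigma> 1) (\<sigma> 2))
       = f 0 1 2 + f 0 2 1 + f 1 0 2 + f 1 2 0 + f 2 0 1 + f 2 1 0"
  by (simp add: sum_over_permutations_insert transpose_def add_ac)

definition colour_part :: "mono \<Rightarrow> nat \<Rightarrow> nat \<times> nat set" where
  "colour_part p k = (fst p k, {j. (j, k) \<in> snd p})"

lemma monom_eq_zterm_product:
  assumes p: "admissible m p" "finite (snd p)"
  obtains \<eta> where "\<eta> \<noteq> 0"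
    "zterm 0 (colour_part p 0) * zterm 1 (colour_part p 1) * zterm 2 (colour_part p 2) = scalar \<eta> * monom p"
proof -
  define S where "S k = {x \<in> snd p. snd x = k}" for k
  have fin: "finite (S k)" "finite (snd (colour_part p k))" for k
    using p(2) finite_subset[of "snd (colour_part p k)" "fst ` snd p"]
    by (force simp: S_def colour_part_def)+
  have zterm: "zterm k (colour_part p k) = monom (exp_at k (fst p k), S k)" for k
  proof -
    have "{j. (j, k) \<in> snd p} \<times> {k} = S k" by (auto simp: S_def)
    then show ?thesis using zterm_monom[OF fin(2), of k] by (simp add: colour_part_def)
  qed
  have exps: "(\<lambda>k. exp_at 0 (fst p 0) k + exp_at 1 (fst p 1) k + exp_at 2 (fst p 2) k) = fst p"
  proof
    fix k show "exp_at 0 (fst p 0) k + exp_at 1 (fst p 1) k + exp_at 2 (fst p 2) k = fst p k"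
      using p(1) by (cases "k < 3") (auto simp: exp_at_def admissible_def less_Suc_eq numeral_3_eq_3)
  qed
  have odd: "S 0 \<union> S 1 \<union> S 2 = snd p"
    using p(1) by (auto simp: S_def admissible_def)
  have disj: "S 0 \<inter> S 1 = {}" "(S 0 \<union> S 1) \<inter> S 2 = {}" by (auto simp: S_def)
  define \<eta> where "\<eta> = mono_sign (S 0) (S 1) * mono_sign (S 0 \<union> S 1) (S 2)"
  have "zterm 0 (colour_part p 0) * zterm 1 (colour_part p 1) * zterm 2 (colour_part p 2)
      = scalar (mono_sign (S 0) (S 1)) * monom (\<lambda>k. exp_at 0 (fst p 0) k + exp_at 1 (fst p 1) k, S 0 \<union> S 1)
        * monom (exp_at 2 (fst p 2), S 2)"
    using fin disj by (simp add: zterm monom_mult mono_coeff_def mono_mult_def)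
  also have "\<dots> = scalar \<eta> * monom p"
    using fin disj exps odd by (simp add: monom_mult mono_coeff_def mono_mult_def \<eta>_def scalar_mult mult.assoc)
  finally have "zterm 0 (colour_part p 0) * zterm 1 (colour_part p 1) * zterm 2 (colour_part p 2)
      = scalar \<eta> * monom p" .
  moreover have "\<eta> \<noteq> 0" by (simp add: \<eta>_def mono_sign_def)
  ultimately show ?thesis using that by blast
qed

lemma orbit_sum_in_Z_fsp:
  assumes p: "admissible m p" "finite (snd p)"
  shows "(\<Sum>\<sigma>\<in>{\<sigma>. \<sigma> permutes {0, 1, 2}}. act_monom \<sigma> p) \<in> Z_fsp m"
proof -
  let ?u = "colour_part p"
  obtain \<eta> where \<eta>: "\<eta> \<noteq> 0" "zterm 0 (?u 0) * zterm 1 (?u 1) * zterm 2 (?u 2) = scalar \<eta> * monom p"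
    using monom_eq_zterm_product[OF p] .
  have odd: "snd (?u k) \<subseteq> {1..m}" "finite (snd (?u k))" for k
    using p(1) by (auto simp: colour_part_def admissible_def intro: finite_subset)
  have act: "act_monom \<sigma> p = scalar (1 / \<eta>) * (zterm (\<sigma> 0) (?u 0) * zterm (\<sigma> 1) (?u 1) * zterm (\<sigma> 2) (?u 2))"
    if "\<sigma> permutes {0, 1, 2}" for \<sigma>
  proof -
    have "monom p = scalar (1 / \<eta>) * (zterm 0 (?u 0) * zterm 1 (?u 1) * zterm 2 (?u 2))"
      using \<eta> by (simp add: scalar_inverse_cancel)
    then show ?thesis
      using that p(2) by (simp add: act_fsp_monom[symmetric] act_fsp_mult act_fsp_scalar act_fsp_zterm
          permutes_inj)
  qed
  have "(\<Sum>\<sigma>\<in>{\<sigma>. \<sigma> permutes {0, 1, 2}}. act_monom \<sigma> p)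
      = (\<Sum>\<sigma>\<in>{\<sigma>. \<sigma> permutes {0, 1, 2}}.
          scalar (1 / \<eta>) * (zterm (\<sigma> 0) (?u 0) * zterm (\<sigma> 1) (?u 1) * zterm (\<sigma> 2) (?u 2)))"
    by (rule sum.cong) (simp_all add: act)
  also have "\<dots> = scalar (1 / \<eta>) * distinct_sum3 (zfam 1 (?u 0)) (zfam 1 (?u 1)) (zfam 1 (?u 2))"
    unfolding sum_permutes3[of "\<lambda>a b c. scalar (1 / \<eta>) * (zterm a (?u 0) * zterm b (?u 1) * zterm c (?u 2))"]
    by (simp add: distinct_sum3_def zfam_def distrib_left add.assoc)
  also have "\<dots> \<in> Z_fsp m"
    by (intro Z_fsp_scalar_mult distinct_sum3_zfam_in_Z_fsp zelem_in_Z_fsp odd)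
       (simp_all only: snd_idx_mult Un_subset_iff odd simp_thms)
  finally show ?thesis .
qed

lemma sum_act_fsp_in_Z_fsp:
  assumes "a \<in> ambient m"
  shows "(\<Sum>\<sigma>\<in>{\<sigma>. \<sigma> permutes {0, 1, 2}}. act_fsp \<sigma> a) \<in> Z_fsp m"
proof -
  have "(\<Sum>\<sigma>\<in>{\<sigma>. \<sigma> permutes {0, 1, 2}}. act_fsp \<sigma> a)
      = (\<Sum>p\<in>sp_supp (Rep_fsp a). scalar (Rep_fsp a p) * (\<Sum>\<sigma>\<in>{\<sigma>. \<sigma> permutes {0, 1, 2}}. act_monom \<sigma> p))"
    by (simp add: act_fsp_def lin_ext_def sum_distrib_left sum.swap[of _ _ "sp_supp _"])
  also have "\<dots> \<in> Z_fsp m"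
    using assms by (intro Z_fsp_sum Z_fsp_scalar_mult orbit_sum_in_Z_fsp)
      (auto simp: ambient_def finite_odd_part_Rep_fsp)
  finally show ?thesis .
qed

lemma subalg_if_invariant_class:
  assumes f: "f \<in> Aring m" and inv: "invariant_class m f"
  shows "\<exists>g\<in>subalg (Zgens m). sp_sub f g \<in> Jideal m"
proof -
  let ?P = "{\<sigma>. \<sigma> permutes {0::nat, 1, 2}}"
  define a where "a = Abs_fsp f"
  have "f \<in> fsp_set" using f Aring_subset_fsp_set by blast
  then have ra: "Rep_fsp a = f" by (simp add: a_def Abs_fsp_inverse)
  define \<rho> where "\<rho> = scalar (1 / 6) * (\<Sum>\<sigma>\<in>?P. act_fsp \<sigma> a)"
  have "\<rho> \<in> Z_fsp m"
    unfolding \<rho>_def using f ra by (intro Z_fsp_scalar_mult sum_act_fsp_in_Z_fsp) (simp add: ambient_iff)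
  have "(\<Sum>\<sigma>\<in>?P. a) = 6 * a"
    using sum_permutes3[of "\<lambda>_ _ _. a"] by (simp add: algebra_simps mult_6_eq_sum)
  then have "a - \<rho> = scalar (1 / 6) * (\<Sum>\<sigma>\<in>?P. - (act_fsp \<sigma> a - a))"
    by (simp add: \<rho>_def sum_subtractf algebra_simps scalar_inverse_cancel flip: scalar_numeral)
  also have "\<dots> \<in> J_fsp m"
  proof (intro J_fsp_scalar_mult sum_closed J_fsp_zero J_fsp_add)
    fix \<sigma> assume "\<sigma> \<in> ?P"
    then have "act_fsp \<sigma> a - a \<in> J_fsp m"
      using inv by (simp add: invariant_class_def J_fsp_def Rep_fsp_diff Rep_fsp_act_fsp ra)
    then show "- (act_fsp \<sigma> a - a) \<in> J_fsp m"
      using J_fsp_scalar_mult[of _ m "-1"] by (metis mult_minus1 scalar_one scalar_uminus)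
  qed
  finally have "sp_sub f (Rep_fsp \<rho>) \<in> Jideal m" by (simp add: J_fsp_def Rep_fsp_diff ra)
  with \<open>\<rho> \<in> Z_fsp m\<close> show ?thesis by (auto simp: Z_fsp_def)
qed

theorem lemma6p1:
  fixes m :: nat
  assumes "1 \<le> m"
  shows "\<forall>f \<in> Aring m.
           invariant_class m f \<longleftrightarrow> (\<exists>g \<in> subalg (Zgens m). sp_sub f g \<in> Jideal m)"
  using subalg_if_invariant_class invariant_class_if_subalg by blast

end
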